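(* Fix an equation $(f,q,w)$ as in the context with $\prod_{i=0}^{N-1}(1/f_i)>0$. Let $\gamma\in(-\pi,0)\cup(0,\pi)$ and $K=(k_{ij})\in SL(2,\mathbb R)$ with $k_{11}-f_0k_{12}\neq0$. Let $\mathbf T_K=\begin{pmatrix}0&1&0&0\\0&0&-k_{21}&k_{11}\end{pmatrix}$. For $M\in\{K,-K\}$ with entries $m_{ij}$, write $\lambda_j(M)$, $\lambda_j(-M)$, $\lambda_j(e^{i\gamma}M)$, $\lambda_j(\mathbf T_K)$ for the eigenvalues with boundary conditions $[M|-I]$, $[-M|-I]$, $[e^{i\gamma}M|-I]$, $\mathbf T_K$; put $m_j=\min\{\lambda_j(M),\lambda_j(-M)\}$, $M_j=\max\{\lambda_j(M),\lambda_j(-M)\}$; and say $P(M)$ holds if for every $0\le j\le N-1$: $\lambda_j(M)<\lambda_j(e^{i\gamma}M)<\lambda_j(-M)$ for $j$ even and $\lambda_j(-M)<\lambda_j(e^{i\gamma}M)<\lambda_j(M)$ for $j$ odd. Then for each $M\in\{K,-K\}$: (i) if $m_{11}-f_0m_{12}>0$ and $f_0m_{11}>0$: $P(M)$ holds, $\lambda_j(\mathbf T_K)\le m_j$ for $0\le j\le N-1$, and $M_j\le\lambda_{j+1}(\mathbf T_K)$ for $0\le j\le N-2$; (ii) if $m_{11}-f_0m_{12}>0$ and $f_0m_{11}<0$: $P(M)$ holds, $M_j\le\lambda_j(\mathbf T_K)\le m_{j+1}$ for $0\le j\le N-2$, and $M_{N-1}\le\lambda_{N-1}(\mathbf T_K)$;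 (iii) if $f_0m_{12}<0$ and $m_{11}=0$: $P(M)$ holds and $M_j\le\lambda_j(\mathbf T_K)\le m_{j+1}$ for $0\le j\le N-2$.
   Context: Let $N\ge2$ be an integer. An equation is given by real sequences $f=\{f_n\}_{n=0}^N$, $q=\{q_n\}_{n=1}^N$, $w=\{w_n\}_{n=1}^N$ with $f_n\neq0$, $w_n>0$; it is $-\nabla(f_n\Delta y_n)+q_ny_n=\lambda w_ny_n$, $1\le n\le N$, for $y=\{y_n\}_{n=0}^{N+1}$, $\Delta y_n=y_{n+1}-y_n$, $\nabla y_n=y_n-y_{n-1}$. A boundary condition $[A\,|\,B]$ (equivalently the $2\times4$ coefficient matrix $(A,B)$ of rank 2) is $A(y_0,f_0\Delta y_0)^T+B(y_N,f_N\Delta y_N)^T=0$; matrices differing by left multiplication by an invertible $2\times2$ complex matrix give the same condition (so $\mathbf T_{-K}=\mathbf T_K$). $SL(2,\mathbb R)$: real $2\times2$ matrices of determinant 1; $I$ the identity. Eigenvalues ($\lambda$ with a nontrivial solution) are real; multiplicity = dimension of the solution space; counted with multiplicity they are ordered $\lambda_0\le\lambda_1\le\cdots$. *)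

theory Defs
  imports "HOL-Analysis.Analysis" "HOL-Library.Function_Algebras"
begin

definition sl_eq :: "(nat \<Rightarrow> real) \<Rightarrow> (nat \<Rightarrow> real) \<Rightarrow> (nat \<Rightarrow> real) \<Rightarrow> nat \<Rightarrow> complex \<Rightarrow> (nat \<Rightarrow> complex) \<Rightarrow> bool" where
  "sl_eq f q w N lam y \<longleftrightarrow>
     (\<forall>n\<in>{1..N}.
        - (complex_of_real (f n) * (y (Suc n) - y n) - complex_of_real (f (n - 1)) * (y n - y (n - 1)))
        + complex_of_real (q n) * y n = lam * complex_of_real (w n) * y n)"

definition col2 :: "complex \<Rightarrow> complex \<Rightarrow> complex^2" where
  "col2 a b = (\<chi> i. if i = 1 then a else b)"

definition bc_holds :: "(nat \<Rightarrow> real) \<Rightarrow> nat \<Rightarrow> complex^2^2 \<Rightarrow> complex^2^2 \<Rightarrow> (nat \<Rightarrow> complex) \<Rightarrow> bool" where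
  "bc_holds f N A B y \<longleftrightarrow>
     A *v col2 (y 0) (complex_of_real (f 0) * (y 1 - y 0))
     + B *v col2 (y N) (complex_of_real (f N) * (y (Suc N) - y N)) = 0"

definition sol_space :: "(nat \<Rightarrow> real) \<Rightarrow> (nat \<Rightarrow> real) \<Rightarrow> (nat \<Rightarrow> real) \<Rightarrow> nat \<Rightarrow> complex^2^2 \<Rightarrow> complex^2^2 \<Rightarrow> complex \<Rightarrow> (nat \<Rightarrow> complex) set" where
  "sol_space f q w N A B lam = {y. (\<forall>n>Suc N. y n = 0) \<and> sl_eq f q w N lam y \<and> bc_holds f N A B y}"

definition is_eigenvalue :: "(nat \<Rightarrow> real) \<Rightarrow> (nat \<Rightarrow> real) \<Rightarrow> (nat \<Rightarrow> real) \<Rightarrow> nat \<Rightarrow> complex^2^2 \<Rightarrow> complex^2^2 \<Rightarrow> complex \<Rightarrow> bool" where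
  "is_eigenvalue f q w N A B lam \<longleftrightarrow> (\<exists>y\<in>sol_space f q w N A B lam. y \<noteq> 0)"

definition eig_mult :: "(nat \<Rightarrow> real) \<Rightarrow> (nat \<Rightarrow> real) \<Rightarrow> (nat \<Rightarrow> real) \<Rightarrow> nat \<Rightarrow> complex^2^2 \<Rightarrow> complex^2^2 \<Rightarrow> complex \<Rightarrow> nat" where
  "eig_mult f q w N A B lam =
     vector_space.dim (\<lambda>(c::complex) (y::nat \<Rightarrow> complex). (\<lambda>n. c * y n)) (sol_space f q w N A B lam)"

definition eig_list :: "(nat \<Rightarrow> real) \<Rightarrow> (nat \<Rightarrow> real) \<Rightarrow> (nat \<Rightarrow> real) \<Rightarrow> nat \<Rightarrow> complex^2^2 \<Rightarrow> complex^2^2 \<Rightarrow> real list" where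
  "eig_list f q w N A B =
     concat (map (\<lambda>x. replicate (eig_mult f q w N A B (complex_of_real x)) x)
       (sorted_list_of_set {x::real. is_eigenvalue f q w N A B (complex_of_real x)}))"

definition eigval :: "(nat \<Rightarrow> real) \<Rightarrow> (nat \<Rightarrow> real) \<Rightarrow> (nat \<Rightarrow> real) \<Rightarrow> nat \<Rightarrow> complex^2^2 \<Rightarrow> complex^2^2 \<Rightarrow> nat \<Rightarrow> real" where
  "eigval f q w N A B j = eig_list f q w N A B ! j"

definition cmat :: "real^2^2 \<Rightarrow> complex^2^2" where
  "cmat M = (\<chi> i j. complex_of_real (M $ i $ j))"

definition cid :: "complex^2^2" where
  "cid = (\<chi> i j. if i = j then 1 else 0)"

definition phase_mat :: "real \<Rightarrow> real^2^2 \<Rightarrow> complex^2^2" where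
  "phase_mat \<gamma> M = (\<chi> i j. exp (\<i> * complex_of_real \<gamma>) * complex_of_real (M $ i $ j))"

text \<open>T_K = ( 0 1 0 0 ; 0 0 -k21 k11 ), split as [A | B].\<close>
definition TK_A :: "real^2^2 \<Rightarrow> complex^2^2" where
  "TK_A K = (\<chi> i j. if i = 1 \<and> j = 2 then 1 else 0)"

definition TK_B :: "real^2^2 \<Rightarrow> complex^2^2" where
  "TK_B K = (\<chi> i j. if i = 2 \<and> j = 1 then - complex_of_real (K $ 2 $ 1)
                   else if i = 2 \<and> j = 2 then complex_of_real (K $ 1 $ 1) else 0)"

end

theory Submission
  imports Defs "HOL-Computational_Algebra.Polynomial" "HOL-Computational_Algebra.Fundamental_Theorem_Algebra"
begin

text \<open>A solution is determined by its initial data (y_0, f_0 \<Delta>y_0), and (y_N, f_N \<Delta>y_N) is obtained from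
  it by a transfer matrix \<Phi>(\<lambda>) whose entries are real polynomials in \<lambda> with det \<Phi> = 1. For det M = 1
  the eigenvalues for [M | -I], [-M | -I] and [e^(i\<gamma>) M | -I] are the solutions of D(\<lambda>) = 2, -2 and
  2 cos \<gamma>, where D = tr (M\<inverse> \<Phi>) is the discriminant, and those for T_K are the zeros of the entry
  E = (M\<inverse> \<Phi>)_21, which changes only its sign when K is replaced by -K.

  Differentiating \<Phi> in \<lambda> expresses D' as a weighted sum of a quadratic form whose discriminant is
  (tr M\<inverse>\<Phi>)^2 - 4, so E D' > 0 wherever |D| < 2; a Green identity shows that D has only real
  zeros. When m11 - f_0 m12 > 0 the leading coefficient of D makes D > 2 far to the left, and D is
  then a zigzag polynomial: strictly monotone on N consecutive pieces, alternately decreasing and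
  increasing, with |D| \<ge> 2 at the break points. So \<lambda>_j for the levels 2, 2 cos \<gamma> and -2 is the
  solution on the j-th piece, which gives the ordering P(M); double eigenvalues occur exactly at
  critical points where \<Phi> = \<plusminus>M. Finally E alternates in sign at the zeros of D, so its zeros
  interlace them, and |D| \<ge> 2 at the zeros of E keeps every level-c point of a piece on the same
  side of them as the zero of D. The sign of f_0 m11 (or m11 = 0, when E has degree N - 1) decides
  whether E has one more zero to the left, to the right, or none.\<close>

lemma poly_decreasing_if_pderiv_neg:
  fixes p :: "real poly"
  assumes "x < y" "\<And>t. x < t \<Longrightarrow> t < y \<Longrightarrow> poly (pderiv p) t < 0"
  shows "poly p y < poly p x"
proof -
  obtain t where t: "x < t" "t < y" "poly p y - poly p x = (y - x) * poly (pderiv p) t"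
    using poly_MVT[OF assms(1), of p] by auto
  have "(y - x) * poly (pderiv p) t < 0" using assms t by (intro mult_pos_neg) auto
  then show ?thesis using t by simp
qed

lemma poly_increasing_if_pderiv_pos:
  fixes p :: "real poly"
  assumes "x < y" "\<And>t. x < t \<Longrightarrow> t < y \<Longrightarrow> poly (pderiv p) t > 0"
  shows "poly p x < poly p y"
  using poly_decreasing_if_pderiv_neg[of x y "- p"] assms by (simp add: pderiv_minus)

lemma pderiv_sign_constant:
  fixes p :: "real poly"
  assumes "\<And>x. a < x \<Longrightarrow> x < b \<Longrightarrow> poly (pderiv p) x \<noteq> 0"
  shows "(\<forall>x\<in>{a<..<b}. poly (pderiv p) x > 0) \<or> (\<forall>x\<in>{a<..<b}. poly (pderiv p) x < 0)"
proof (rule ccontr)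
  assume "\<not> ?thesis"
  then obtain x1 x2 where x1: "a < x1" "x1 < b" "poly (pderiv p) x1 < 0"
    and x2: "a < x2" "x2 < b" "poly (pderiv p) x2 > 0"
    using assms by (auto simp: not_less order_le_less)
  have "\<exists>t. min x1 x2 < t \<and> t < max x1 x2 \<and> poly (pderiv p) t = 0"
  proof (cases "x1 < x2")
    case True
    then show ?thesis using poly_IVT[OF True, of "pderiv p"] x1 x2 by (auto simp: mult_neg_pos)
  next
    case False
    then have lt: "x2 < x1" using x1 x2 by (cases "x1 = x2") auto
    show ?thesis using poly_IVT[OF lt, of "pderiv p"] x1 x2 by (auto simp: mult_pos_neg)
  qed
  then show False using assms x1 x2 by force
qed

lemma poly_decreasing_through_root:
  fixes p :: "real poly"
  assumes "a < z" "z < b" "poly p z = 0" "poly p a > 0"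
    and "\<And>x. a < x \<Longrightarrow> x < b \<Longrightarrow> poly (pderiv p) x \<noteq> 0"
  shows "\<forall>x\<in>{a<..<b}. poly (pderiv p) x < 0" and "poly p b < 0"
proof -
  have "\<not> (\<forall>x\<in>{a<..<b}. poly (pderiv p) x > 0)"
  proof
    assume "\<forall>x\<in>{a<..<b}. poly (pderiv p) x > 0"
    then have "poly p a < poly p z" using assms(1,2) by (intro poly_increasing_if_pderiv_pos) auto
    then show False using assms(3,4) by simp
  qed
  then show neg: "\<forall>x\<in>{a<..<b}. poly (pderiv p) x < 0"
    using pderiv_sign_constant[of a b p] assms(5) by blast
  show "poly p b < 0"
    using poly_decreasing_if_pderiv_neg[of z b p] neg assms(1-3) by auto
qed

lemma card_roots_eq_degree_if_real_simple:
  fixes p :: "real poly"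
  assumes p0: "p \<noteq> 0"
    and real: "\<And>z. poly (map_poly complex_of_real p) z = 0 \<Longrightarrow> Im z = 0"
    and simple: "\<And>x. poly p x = 0 \<Longrightarrow> poly (pderiv p) x \<noteq> 0"
  shows "card {x. poly p x = 0} = degree p"
proof -
  define pc where "pc = map_poly complex_of_real p"
  have pc0: "pc \<noteq> 0" using p0 unfolding pc_def by (subst map_poly_eq_0_iff) auto
  have evr: "poly (map_poly complex_of_real r) (of_real x) = of_real (poly r x)" for r x
    by (induction r) (auto simp: map_poly_pCons)
  have "pderiv pc = map_poly complex_of_real (pderiv p)"
    unfolding pc_def by (rule poly_eqI) (simp add: coeff_map_poly coeff_pderiv)
  then have evd: "poly (pderiv pc) (of_real x) = of_real (poly (pderiv p) x)" for x
    by (simp add: evr)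
  have R: "{z. poly pc z = 0} = complex_of_real ` {x. poly p x = 0}"
  proof (intro equalityI subsetI)
    fix z assume "z \<in> {z. poly pc z = 0}"
    then have z: "poly pc z = 0" by simp
    then have zr: "z = of_real (Re z)" using real by (simp add: pc_def complex_eq_iff)
    then have "poly p (Re z) = 0" using z evr[of p "Re z"] by (simp add: pc_def)
    then show "z \<in> complex_of_real ` {x. poly p x = 0}" using zr by blast
  qed (use evr in \<open>auto simp: pc_def\<close>)
  have "rsquarefree pc" unfolding rsquarefree_roots
  proof (intro allI notI)
    fix a assume a: "poly pc a = 0 \<and> poly (pderiv pc) a = 0"
    then obtain x where "a = of_real x" "poly p x = 0" using R by blast
    then show False using a simple evd[of x] by simp
  qed
  then have "pc = smult (lead_coeff pc) (\<Prod>z|poly pc z = 0. [:-z, 1:])"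
    using complex_poly_decompose_rsquarefree by simp
  then have "degree pc = degree (\<Prod>z|poly pc z = 0. [:-z, 1:])"
    using pc0 by (metis degree_smult_eq leading_coeff_0_iff)
  also have "\<dots> = card {z. poly pc z = 0}" by (subst degree_prod_sum_eq) auto
  also have "\<dots> = card {x. poly p x = 0}" unfolding R by (rule card_image) (simp add: inj_on_def)
  finally show ?thesis by (simp add: pc_def degree_map_poly)
qed

lemma poly_pinfty_gt:
  fixes p :: "real poly"
  assumes "degree p \<ge> 1" "lead_coeff p > 0"
  shows "\<exists>R. \<forall>x\<ge>R. poly p x > K"
proof -
  have "lead_coeff ([:- K:] + p) = lead_coeff p" using assms by (intro lead_coeff_add_le) simp
  then obtain R where "\<forall>x\<ge>R. poly ([:- K:] + p) x \<ge> lead_coeff p"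
    using poly_pinfty_gt_lc[of "[:- K:] + p"] assms by auto
  then have "\<forall>x\<ge>R. poly p x > K" using assms(2) by (auto simp: algebra_simps)
  then show ?thesis by blast
qed

lemma poly_minfty_gt:
  fixes p :: "real poly"
  assumes "degree p \<ge> 1" "(-1) ^ degree p * lead_coeff p > 0"
  shows "\<exists>R. \<forall>x\<le>R. poly p x > K"
proof -
  define r where "r = pcompose p [:0, -1:]"
  have "degree r = degree p" "lead_coeff r = lead_coeff p * (-1) ^ degree p"
    unfolding r_def by (simp add: degree_pcompose) (subst lead_coeff_comp; simp)
  then obtain R where R: "\<forall>x\<ge>R. poly r x > K" using poly_pinfty_gt[of r K] assms by (auto simp: mult.commute)
  have "poly p x > K" if "x \<le> -R" for x
    using that R[rule_format, of "- x"] by (simp add: r_def poly_pcompose)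
  then show ?thesis by blast
qed

lemma poly_abs_pinfty_gt:
  fixes p :: "real poly"
  assumes "degree p \<ge> 1"
  shows "\<exists>R. \<forall>x\<ge>R. \<bar>poly p x\<bar> > K"
proof (cases "lead_coeff p > 0")
  case True
  then obtain R where "\<forall>x\<ge>R. poly p x > \<bar>K\<bar>" using poly_pinfty_gt[OF assms] by blast
  then show ?thesis by force
next
  case False
  have "lead_coeff p \<noteq> 0" using assms by auto
  then have "lead_coeff p < 0" using False by linarith
  then have "lead_coeff (- p) > 0" by simp
  then obtain R where "\<forall>x\<ge>R. poly (- p) x > \<bar>K\<bar>" using poly_pinfty_gt[of "- p"] assms by auto
  then show ?thesis by force
qed

lemma count_mset_map_upt: "count (mset (map g [0..<n])) x = card {k. k < n \<and> g k = x}"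
proof (induction n)
  case (Suc n)
  have "{k. k < Suc n \<and> g k = x} = (if g n = x then insert n {k. k < n \<and> g k = x} else {k. k < n \<and> g k = x})"
    by (auto simp: less_Suc_eq)
  then show ?case using Suc by auto
qed simp

lemma concat_replicate_sorted_list_of_set:
  fixes L :: "'a :: linorder list"
  assumes "sorted L" "{x. E x} = set L" "\<And>x. x \<in> set L \<Longrightarrow> m x = count (mset L) x"
  shows "concat (map (\<lambda>x. replicate (m x) x) (sorted_list_of_set {x. E x})) = L"
proof -
  define R where "R = concat (map (\<lambda>x. replicate (m x) x) (sorted_list_of_set {x. E x}))"
  have "sorted (concat (map (\<lambda>x. replicate (m x) x) xs))" if "sorted xs" for xs
    using that by (induction xs) (auto simp: sorted_append)
  then have "sorted R" unfolding R_def by simp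
  have count_R: "count (mset R) y = (if y \<in> set L then m y else 0)" for y
  proof -
    have "count (mset (concat (map (\<lambda>x. replicate (m x) x) xs))) y = (if y \<in> set xs then m y else 0)"
      if "distinct xs" for xs :: "'a list" using that by (induction xs) auto
    then show ?thesis unfolding R_def using assms(2) by (metis List.finite_set distinct_sorted_list_of_set set_sorted_list_of_set)
  qed
  have "mset R = mset L"
    by (rule multiset_eqI) (use assms(3) in \<open>auto simp: count_R count_eq_zero_iff\<close>)
  then have "sort L = R" using \<open>sorted R\<close> by (intro properties_for_sort) auto
  then show ?thesis using assms(1) by (simp add: R_def sorted_sort_id)
qed

lemma sorted_list_of_set_image_upt:
  fixes r :: "nat \<Rightarrow> 'a :: linorder"
  assumes "\<And>i j. a \<le> i \<Longrightarrow> i < j \<Longrightarrow> j < b \<Longrightarrow> r i < r j"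
  shows "sorted_list_of_set (r ` {a..<b}) = map r [a..<b]"
proof -
  have "sorted_wrt (<) (map r [a..<b])" unfolding sorted_wrt_iff_nth_less using assms by auto
  then show ?thesis
    by (metis List.set_map set_upt sorted_list_of_set_sort_remdups strict_sorted_iff sorted_sort_id remdups_id_iff_distinct)
qed

lemma poly_roots_eq_image:
  fixes p :: "real poly"
  assumes "p \<noteq> 0" "degree p \<le> card I" "finite I" "inj_on r I" "\<And>i. i \<in> I \<Longrightarrow> poly p (r i) = 0"
  shows "{x. poly p x = 0} = r ` I"
proof -
  have sub: "r ` I \<subseteq> {x. poly p x = 0}" using assms(5) by auto
  have "card {x. poly p x = 0} \<le> card (r ` I)"
    using card_poly_roots_bound[OF assms(1)] assms(2) card_image[OF assms(4)] by simp
  then show ?thesis using card_subset_eq[OF poly_roots_finite[OF assms(1)] sub]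
    by (metis card_mono poly_roots_finite[OF assms(1)] sub le_antisym)
qed

section \<open>Zigzag polynomials\<close>

lemma sorted_roots_and_critical_points:
  fixes p :: "real poly"
  assumes N1: "N \<ge> 1" and deg: "degree p = N" and roots: "card {x. poly p x = 0} = N"
  obtains z c where "\<And>k. k < N \<Longrightarrow> poly p (z k) = 0"
    and "\<And>k. k \<in> {1..<N} \<Longrightarrow> z (k - 1) < c k \<and> c k < z k"
    and "{x. poly (pderiv p) x = 0} = c ` {1..<N}"
proof -
  have fin: "finite {x. poly p x = 0}" using deg N1 by (intro poly_roots_finite) auto
  define zs where "zs = sorted_list_of_set {x. poly p x = 0}"
  define z where "z k = zs ! k" for k
  have len: "length zs = N" using roots fin by (simp add: zs_def)
  have zmono: "z i < z j" if "i < j" "j < N" for i j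
    using sorted_wrt_nth_less[of "(<)" zs i j] that len by (simp add: z_def zs_def)
  have zroot: "poly p (z k) = 0" if "k < N" for k
    using nth_mem[of k zs] that len fin by (simp add: z_def zs_def)
  have "\<exists>t. z (k - 1) < t \<and> t < z k \<and> poly (pderiv p) t = 0" if k: "k \<in> {1..<N}" for k
  proof -
    have lt: "z (k - 1) < z k" using k by (intro zmono) auto
    obtain t where "z (k - 1) < t" "t < z k"
        "poly p (z k) - poly p (z (k - 1)) = (z k - z (k - 1)) * poly (pderiv p) t"
      using poly_MVT[OF lt, of p] by auto
    then show ?thesis using lt k zroot[of k] zroot[of "k - 1"] by auto
  qed
  then obtain c where c: "\<And>k. k \<in> {1..<N} \<Longrightarrow> z (k - 1) < c k \<and> c k < z k \<and> poly (pderiv p) (c k) = 0"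
    by metis
  have cmono: "c i < c j" if "i < j" "i \<in> {1..<N}" "j \<in> {1..<N}" for i j
  proof -
    have "c i < z i" using c that by auto
    also have "z i \<le> z (j - 1)" using that zmono by (cases "i = j - 1") (auto intro: less_imp_le)
    also have "z (j - 1) < c j" using c that by auto
    finally show ?thesis .
  qed
  have dp0: "pderiv p \<noteq> 0" using deg N1 by (simp add: pderiv_eq_0_iff)
  define C where "C = {x. poly (pderiv p) x = 0}"
  have "inj_on c {1..<N}" by (rule inj_onI) (metis cmono less_irrefl nat_neq_iff)
  then have "card (c ` {1..<N}) = N - 1" by (simp add: card_image)
  moreover have "card C \<le> N - 1"
    unfolding C_def using card_poly_roots_bound[OF dp0] deg by (simp add: degree_pderiv)
  moreover have "c ` {1..<N} \<subseteq> C" using c by (auto simp: C_def)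
  moreover have "finite C" unfolding C_def using poly_roots_finite[OF dp0] .
  ultimately have "c ` {1..<N} = C" by (metis card_mono card_subset_eq le_antisym)
  then show ?thesis using that[of z c] zroot c by (auto simp: C_def)
qed

locale zigzag =
  fixes p :: "real poly" and N :: nat and \<xi> :: "nat \<Rightarrow> real"
  assumes break_increasing: "\<And>k. k < N \<Longrightarrow> \<xi> k < \<xi> (Suc k)"
    and pderiv_alternating: "\<And>k x. k < N \<Longrightarrow> \<xi> k < x \<Longrightarrow> x < \<xi> (Suc k) \<Longrightarrow>
          (if even k then poly (pderiv p) x < 0 else poly (pderiv p) x > 0)"
    and break_values: "\<And>k. k \<le> N \<Longrightarrow> (if even k then poly p (\<xi> k) \<ge> 2 else poly p (\<xi> k) \<le> -2)"
    and small_values_inside: "\<And>x. \<bar>poly p x\<bar> \<le> 2 \<Longrightarrow> \<xi> 0 < x \<and> x < \<xi> N"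
    and critical_points: "{x. poly (pderiv p) x = 0} = \<xi> ` {1..<N}"

lemma alternating_signs_through_roots:
  fixes p :: "real poly"
  assumes root: "\<And>k. k < N \<Longrightarrow> \<xi> k < z k \<and> z k < \<xi> (Suc k) \<and> poly p (z k) = 0"
    and nocrit: "\<And>k x. k < N \<Longrightarrow> \<xi> k < x \<Longrightarrow> x < \<xi> (Suc k) \<Longrightarrow> poly (pderiv p) x \<noteq> 0"
    and start: "poly p (\<xi> 0) > 0"
  shows "k \<le> N \<Longrightarrow> (-1) ^ k * poly p (\<xi> k) > 0"
    and "k < N \<Longrightarrow> \<xi> k < x \<Longrightarrow> x < \<xi> (Suc k) \<Longrightarrow> (-1) ^ k * poly (pderiv p) x < 0"
proof -
  define s where "s k = smult ((-1) ^ k) p" for k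
  have piece: "(\<forall>x\<in>{\<xi> k<..<\<xi> (Suc k)}. poly (pderiv (s k)) x < 0) \<and> poly (s k) (\<xi> (Suc k)) < 0"
    if "k < N" "poly (s k) (\<xi> k) > 0" for k
    using poly_decreasing_through_root[of "\<xi> k" "z k" "\<xi> (Suc k)" "s k"] that root[of k] nocrit[of k]
    by (auto simp: s_def pderiv_smult)
  have sign: "poly (s k) (\<xi> k) > 0" if "k \<le> N" for k
    using that
  proof (induction k)
    case 0 then show ?case using start by (simp add: s_def)
  next
    case (Suc k) then show ?case using piece[of k] by (simp add: s_def)
  qed
  show "k \<le> N \<Longrightarrow> (-1) ^ k * poly p (\<xi> k) > 0" using sign by (simp add: s_def)
  show "k < N \<Longrightarrow> \<xi> k < x \<Longrightarrow> x < \<xi> (Suc k) \<Longrightarrow> (-1) ^ k * poly (pderiv p) x < 0"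
    using piece[of k] sign[of k] by (simp add: s_def pderiv_smult)
qed

lemma zigzag_exists:
  fixes p :: "real poly"
  assumes N1: "N \<ge> 1" and deg: "degree p = N" and roots: "card {x. poly p x = 0} = N"
    and crit: "\<And>x. \<bar>poly p x\<bar> < 2 \<Longrightarrow> poly (pderiv p) x \<noteq> 0"
    and left: "\<exists>R. \<forall>x\<le>R. poly p x > 2" and right: "\<exists>R. \<forall>x\<ge>R. \<bar>poly p x\<bar> > 2"
  obtains \<xi> where "zigzag p N \<xi>"
proof -
  obtain z c where zroot: "\<And>k. k < N \<Longrightarrow> poly p (z k) = 0"
    and c: "\<And>k. k \<in> {1..<N} \<Longrightarrow> z (k - 1) < c k \<and> c k < z k"
    and C: "{x. poly (pderiv p) x = 0} = c ` {1..<N}"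
    using sorted_roots_and_critical_points[OF N1 deg roots] by blast
  obtain R1 R2 where R1: "\<forall>x\<le>R1. poly p x > 2" and R2: "\<forall>x\<ge>R2. \<bar>poly p x\<bar> > 2"
    using left right by blast
  text \<open>The break points are the critical points and two points beyond the region |p| \<le> 2.\<close>
  define \<xi> where "\<xi> k = (if k = 0 then min R1 (z 0 - 1) else if k = N then max R2 (z (N - 1) + 1) else c k)" for k
  have zin: "\<xi> k < z k \<and> z k < \<xi> (Suc k)" if "k < N" for k
    using that c[of k] c[of "Suc k"] by (auto simp: \<xi>_def)
  then have inc: "\<xi> k < \<xi> (Suc k)" if "k < N" for k using that by fastforce
  have crit_eq: "{x. poly (pderiv p) x = 0} = \<xi> ` {1..<N}" unfolding C by (auto simp: \<xi>_def)
  have nocrit: "poly (pderiv p) x \<noteq> 0" if "k < N" "\<xi> k < x" "x < \<xi> (Suc k)" for k x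
  proof
    assume "poly (pderiv p) x = 0"
    then obtain j where j: "j \<in> {1..<N}" "x = \<xi> j" using crit_eq by blast
    have mono: "\<xi> a \<le> \<xi> b" if "a \<le> b" "b \<le> N" for a b
      using lift_Suc_mono_le_ivl[of "{..<N}" \<xi> a b] inc that by (force simp: less_imp_le)
    show False using mono[of j k] mono[of "Suc k" j] that j by (cases "j \<le> k") auto
  qed
  have left_break: "poly p (\<xi> 0) > 2" using R1 by (simp add: \<xi>_def)
  have root_in_piece: "\<xi> k < z k \<and> z k < \<xi> (Suc k) \<and> poly p (z k) = 0" if "k < N" for k
    using zin zroot that by blast
  have start: "poly p (\<xi> 0) > 0" using left_break by simp
  have abs_at_break: "\<bar>poly p (\<xi> k)\<bar> \<ge> 2" if k: "k \<le> N" for k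
  proof -
    consider "k = 0" | "k = N" "k \<noteq> 0" | "k \<in> {1..<N}" using k by force
    then show ?thesis
    proof cases
      case 1 then show ?thesis using left_break by simp
    next
      case 2 then show ?thesis using R2 by (simp add: \<xi>_def less_imp_le)
    next
      case 3 then show ?thesis using crit crit_eq by (force simp: not_le)
    qed
  qed
  have "zigzag p N \<xi>"
  proof
    show "\<And>k. k < N \<Longrightarrow> \<xi> k < \<xi> (Suc k)" by (rule inc)
    show "if even k then poly (pderiv p) x < 0 else poly (pderiv p) x > 0"
      if "k < N" "\<xi> k < x" "x < \<xi> (Suc k)" for k x
    proof -
      have "(-1) ^ k * poly (pderiv p) x < 0"
        by (rule alternating_signs_through_roots(2)[of N \<xi> z p]) (use root_in_piece nocrit start that in auto)
      then show ?thesis by (auto simp: minus_one_power_iff)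
    qed
    show "if even k then poly p (\<xi> k) \<ge> 2 else poly p (\<xi> k) \<le> -2" if "k \<le> N" for k
    proof -
      have "(-1) ^ k * poly p (\<xi> k) > 0"
        by (rule alternating_signs_through_roots(1)[of N \<xi> z p]) (use root_in_piece nocrit start that in auto)
      then show ?thesis using abs_at_break[OF that] by (auto simp: minus_one_power_iff)
    qed
    show "\<xi> 0 < x \<and> x < \<xi> N" if "\<bar>poly p x\<bar> \<le> 2" for x
      using that R1 R2 N1 by (auto simp: \<xi>_def not_less dest: spec[of _ x])
    show "{x. poly (pderiv p) x = 0} = \<xi> ` {1..<N}" by (rule crit_eq)
  qed
  then show ?thesis by (rule that)
qed

context zigzag
begin

lemma break_less: "i < j \<Longrightarrow> j \<le> N \<Longrightarrow> \<xi> i < \<xi> j"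
  using lift_Suc_mono_less_ivl[of "{..<N}" \<xi> i j] break_increasing by force

lemma break_le: "i \<le> j \<Longrightarrow> j \<le> N \<Longrightarrow> \<xi> i \<le> \<xi> j"
  using break_less[of i j] by (cases "i = j") auto

lemma break_less_iff: "i \<le> N \<Longrightarrow> j \<le> N \<Longrightarrow> \<xi> i < \<xi> j \<longleftrightarrow> i < j"
  using break_less[of i j] break_le[of j i] by (cases "i < j") auto

lemma poly_strict_mono_on_piece:
  assumes k: "k < N" and "\<xi> k \<le> x" "x < y" "y \<le> \<xi> (Suc k)"
  shows "if even k then poly p y < poly p x else poly p x < poly p y"
proof (cases "even k")
  case True
  then have "poly p y < poly p x" using pderiv_alternating[OF k] assms
    by (intro poly_decreasing_if_pderiv_neg) auto
  then show ?thesis using True by simp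
next
  case False
  then have "poly p x < poly p y" using pderiv_alternating[OF k] assms
    by (intro poly_increasing_if_pderiv_pos) auto
  then show ?thesis using False by simp
qed

lemma piece_attains_level:
  assumes k: "k < N" and c: "\<bar>c\<bar> \<le> 2"
  shows "\<exists>x. \<xi> k \<le> x \<and> x \<le> \<xi> (Suc k) \<and> poly p x = c"
proof -
  have v: "if even k then poly p (\<xi> k) \<ge> 2 else poly p (\<xi> k) \<le> -2"
    "if even (Suc k) then poly p (\<xi> (Suc k)) \<ge> 2 else poly p (\<xi> (Suc k)) \<le> -2"
    using break_values k by auto
  have le: "\<xi> k \<le> \<xi> (Suc k)" using break_increasing[OF k] by simp
  show ?thesis
  proof (cases "even k")
    case True
    then have "poly p (\<xi> (Suc k)) \<le> c" "c \<le> poly p (\<xi> k)" using v c by auto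
    then show ?thesis using IVT2[of "poly p" "\<xi> (Suc k)" c "\<xi> k", OF _ _ le] by auto
  next
    case False
    then have "poly p (\<xi> k) \<le> c" "c \<le> poly p (\<xi> (Suc k))" using v c by auto
    then show ?thesis using IVT[of "poly p" "\<xi> k" c "\<xi> (Suc k)", OF _ _ le] by auto
  qed
qed

lemma poly_inj_on_piece:
  assumes k: "k < N" and "\<xi> k \<le> x" "x \<le> \<xi> (Suc k)" "\<xi> k \<le> y" "y \<le> \<xi> (Suc k)"
    and "poly p x = poly p y"
  shows "x = y"
proof (rule ccontr)
  assume "x \<noteq> y"
  then consider "x < y" | "y < x" by linarith
  then show False
  proof cases
    case 1 then show False
      using poly_strict_mono_on_piece[OF k assms(2) 1 assms(5)] assms(6) by (auto split: if_splits)
  next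
    case 2 then show False
      using poly_strict_mono_on_piece[OF k assms(4) 2 assms(3)] assms(6) by (auto split: if_splits)
  qed
qed

definition branch :: "nat \<Rightarrow> real \<Rightarrow> real" where
  "branch k c = (THE x. \<xi> k \<le> x \<and> x \<le> \<xi> (Suc k) \<and> poly p x = c)"

lemma branch_spec:
  assumes "k < N" "\<bar>c\<bar> \<le> 2"
  shows "\<xi> k \<le> branch k c" "branch k c \<le> \<xi> (Suc k)" "poly p (branch k c) = c"
proof -
  obtain x where x: "\<xi> k \<le> x \<and> x \<le> \<xi> (Suc k) \<and> poly p x = c"
    using piece_attains_level[OF assms] by blast
  have "branch k c = x" unfolding branch_def
    using x poly_inj_on_piece[OF assms(1)] by (intro the_equality) auto
  then show "\<xi> k \<le> branch k c" "branch k c \<le> \<xi> (Suc k)" "poly p (branch k c) = c" using x by auto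
qed

lemma branch_eq_iff:
  assumes "k < N" "\<bar>c\<bar> \<le> 2" "poly p x = c"
  shows "branch k c = x \<longleftrightarrow> \<xi> k \<le> x \<and> x \<le> \<xi> (Suc k)"
  using poly_inj_on_piece[OF assms(1) branch_spec(1,2)[OF assms(1,2)], of x] branch_spec[OF assms(1,2)] assms(3)
  by auto

lemma branch_in_open_piece:
  assumes k: "k < N" and c: "\<bar>c\<bar> < 2"
  shows "\<xi> k < branch k c" "branch k c < \<xi> (Suc k)"
proof -
  have c': "\<bar>c\<bar> \<le> 2" using c by simp
  have "\<bar>poly p (\<xi> k)\<bar> \<ge> 2" "\<bar>poly p (\<xi> (Suc k))\<bar> \<ge> 2"
    using break_values[of k] break_values[of "Suc k"] k by (auto split: if_splits)
  then have "branch k c \<noteq> \<xi> k" "branch k c \<noteq> \<xi> (Suc k)" using branch_spec(3)[OF k c'] c by auto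
  then show "\<xi> k < branch k c" "branch k c < \<xi> (Suc k)" using branch_spec(1,2)[OF k c'] by auto
qed

lemma branch_strict_mono_level:
  assumes k: "k < N" and "\<bar>c1\<bar> \<le> 2" "\<bar>c2\<bar> \<le> 2" "c1 < c2"
  shows "if even k then branch k c2 < branch k c1 else branch k c1 < branch k c2"
proof -
  note r1 = branch_spec[OF k assms(2)] and r2 = branch_spec[OF k assms(3)]
  have "branch k c1 \<noteq> branch k c2" using r1(3) r2(3) assms(4) by auto
  then consider "branch k c1 < branch k c2" | "branch k c2 < branch k c1" by linarith
  then show ?thesis
  proof cases
    case 1
    then show ?thesis using poly_strict_mono_on_piece[OF k r1(1) 1 r2(2)] r1(3) r2(3) assms(4)
      by (auto split: if_splits)
  next
    case 2
    then show ?thesis using poly_strict_mono_on_piece[OF k r2(1) 2 r1(2)] r1(3) r2(3) assms(4)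
      by (auto split: if_splits)
  qed
qed

lemma branch_mono:
  assumes "i \<le> j" "j < N" "\<bar>c\<bar> \<le> 2"
  shows "branch i c \<le> branch j c"
proof (rule lift_Suc_mono_le_ivl[of "{..<N - 1}" "\<lambda>k. branch k c"])
  fix k assume "k \<in> {..<N - 1}"
  then have "k < N" "Suc k < N" by auto
  then show "branch k c \<le> branch (Suc k) c"
    using branch_spec(2)[of k c] branch_spec(1)[of "Suc k" c] assms(3) by linarith
qed (use assms in auto)
lemma branch_zero_less: 
  assumes "i < j" "j < N"
  shows "branch i 0 < branch j 0"
proof -
  have "branch i 0 < \<xi> (Suc i)" using branch_in_open_piece[of i 0] assms by simp
  also have "\<xi> (Suc i) \<le> \<xi> j" using assms by (intro break_le) auto
  also have "\<xi> j < branch j 0" using branch_in_open_piece[of j 0] assms by simp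
  finally show ?thesis .
qed

lemma ex_piece:
  assumes "\<xi> 0 < x" "x < \<xi> N"
  obtains k where "k < N" "\<xi> k \<le> x" "x \<le> \<xi> (Suc k)"
proof -
  define k where "k = (GREATEST k. k \<le> N \<and> \<xi> k \<le> x)"
  have kp: "k \<le> N \<and> \<xi> k \<le> x" unfolding k_def
    by (rule GreatestI_nat[where k=0 and b=N]) (use assms in auto)
  have kmax: "j \<le> k" if "j \<le> N" "\<xi> j \<le> x" for j
    unfolding k_def using that by (intro Greatest_le_nat[where b=N]) auto
  have kN: "k < N" using kp assms(2) by (metis le_neq_implies_less not_le)
  have "x \<le> \<xi> (Suc k)"
  proof (rule ccontr)
    assume "\<not> x \<le> \<xi> (Suc k)"
    then have "Suc k \<le> k" using kmax[of "Suc k"] kN by auto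
    then show False by simp
  qed
  then show ?thesis using that kN kp by blast
qed

lemma ex_branch_eq:
  assumes "\<bar>c\<bar> \<le> 2" "poly p x = c"
  shows "\<exists>k<N. branch k c = x"
proof -
  have "\<xi> 0 < x" "x < \<xi> N" using small_values_inside assms by auto
  then obtain k where "k < N" "\<xi> k \<le> x" "x \<le> \<xi> (Suc k)" by (rule ex_piece)
  then show ?thesis using branch_eq_iff assms by blast
qed

lemma pieces_containing_break:
  assumes i: "i \<in> {1..<N}"
  shows "{k. k < N \<and> \<xi> k \<le> \<xi> i \<and> \<xi> i \<le> \<xi> (Suc k)} = {i - 1, i}"
proof -
  have "k \<le> i \<and> i \<le> Suc k" if "k < N" "\<xi> k \<le> \<xi> i" "\<xi> i \<le> \<xi> (Suc k)" for k
    using that i break_less_iff[of i k] break_less_iff[of "Suc k" i] by (auto simp: not_less[symmetric])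
  then show ?thesis using i break_increasing[of i] break_increasing[of "i - 1"] by (fastforce simp: less_imp_le)
qed

lemma pieces_containing_regular_point:
  assumes "\<xi> 0 < x" "x < \<xi> N" "x \<notin> \<xi> ` {..N}"
  shows "card {k. k < N \<and> \<xi> k \<le> x \<and> x \<le> \<xi> (Suc k)} = 1"
proof -
  obtain k where k: "k < N" "\<xi> k \<le> x" "x \<le> \<xi> (Suc k)" using ex_piece assms(1,2) .
  have ne: "x \<noteq> \<xi> i" if "i \<le> N" for i using assms(3) that by auto
  have "j = k" if j: "j < N" "\<xi> j \<le> x" "x \<le> \<xi> (Suc j)" for j
  proof -
    have "Suc j \<le> N" "Suc k \<le> N" using j(1) k(1) by auto
    then have lt: "\<xi> j < x" "x < \<xi> (Suc j)" "\<xi> k < x" "x < \<xi> (Suc k)"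
      using j k ne[of j] ne[of "Suc j"] ne[of k] ne[of "Suc k"] by (auto simp: order_le_less)
    show ?thesis
    proof (rule ccontr)
      assume "j \<noteq> k"
      then consider "Suc j \<le> k" | "Suc k \<le> j" by linarith
      then show False
        using lt break_le[of "Suc j" k] break_le[of "Suc k" j] j(1) k(1) by cases auto
    qed
  qed
  then have "{k. k < N \<and> \<xi> k \<le> x \<and> x \<le> \<xi> (Suc k)} = {k}" using k by blast
  then show ?thesis by simp
qed

lemma card_branch_preimage:
  assumes c: "\<bar>c\<bar> \<le> 2" and px: "poly p x = c"
  shows "card {k. k < N \<and> branch k c = x} = (if poly (pderiv p) x = 0 then 2 else 1)"
proof -
  have x: "\<xi> 0 < x" "x < \<xi> N" using small_values_inside c px by auto
  have eq: "{k. k < N \<and> branch k c = x} = {k. k < N \<and> \<xi> k \<le> x \<and> x \<le> \<xi> (Suc k)}"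
    using branch_eq_iff[OF _ c px] by blast
  show ?thesis
  proof (cases "poly (pderiv p) x = 0")
    case True
    then obtain i where i: "i \<in> {1..<N}" "x = \<xi> i" using critical_points by blast
    then have "{k. k < N \<and> branch k c = x} = {i - 1, i}" using eq pieces_containing_break[OF i(1)] by simp
    moreover have "i - 1 \<noteq> i" using i(1) by auto
    ultimately show ?thesis using True by simp
  next
    case False
    have "x \<notin> \<xi> ` {..N}"
    proof
      assume "x \<in> \<xi> ` {..N}"
      then obtain j where "j \<le> N" "x = \<xi> j" by blast
      then have "j \<in> {1..<N}" using x by (cases "j = 0"; cases "j = N") auto
      then show False using False critical_points \<open>x = \<xi> j\<close> by blast
    qed
    then show ?thesis unfolding eq using pieces_containing_regular_point x False by simp
  qed
qed

lemma le_branch_iff: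
  assumes k: "k < N" and c: "\<bar>c\<bar> \<le> 2" and x: "\<xi> k \<le> x" "x \<le> \<xi> (Suc k)"
  shows "x \<le> branch k c \<longleftrightarrow> (if even k then poly p x \<ge> c else poly p x \<le> c)"
proof -
  note r = branch_spec[OF k c]
  consider "x = branch k c" | "x < branch k c" | "branch k c < x" by linarith
  then show ?thesis
  proof cases
    case 1 then show ?thesis using r by simp
  next
    case 2 then show ?thesis using poly_strict_mono_on_piece[OF k x(1) 2 r(2)] r(3) by (auto split: if_splits)
  next
    case 3 then show ?thesis using poly_strict_mono_on_piece[OF k r(1) 3 x(2)] r(3) by (auto split: if_splits)
  qed
qed

text \<open>A point where |p| \<ge> 2 cannot lie strictly between the zero and a level-c point of the same
  piece, because p is monotone there.\<close>

lemma le_branch_if_le_branch_zero: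
  assumes k: "k < N" and r: "r \<le> branch k 0" and big: "\<bar>poly p r\<bar> \<ge> 2" and c: "\<bar>c\<bar> \<le> 2"
  shows "r \<le> branch k c"
proof (cases "r \<le> \<xi> k")
  case True then show ?thesis using branch_spec(1)[OF k c] by simp
next
  case False
  have c0: "\<bar>0::real\<bar> \<le> 2" by simp
  have piece: "\<xi> k \<le> r" "r \<le> \<xi> (Suc k)" using False r branch_spec(2)[OF k c0] by auto
  have "if even k then poly p r \<ge> 0 else poly p r \<le> 0" using le_branch_iff[OF k c0 piece] r by simp
  then have "if even k then poly p r \<ge> c else poly p r \<le> c" using big c by (auto split: if_splits)
  then show ?thesis using le_branch_iff[OF k c piece] by simp
qed

lemma branch_le_if_branch_zero_le:
  assumes k: "k < N" and r: "branch k 0 \<le> r" and big: "\<bar>poly p r\<bar> \<ge> 2" and c: "\<bar>c\<bar> \<le> 2"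
  shows "branch k c \<le> r"
proof (rule ccontr)
  assume "\<not> branch k c \<le> r"
  then have lt: "r < branch k c" by simp
  have c0: "\<bar>0::real\<bar> \<le> 2" by simp
  have piece: "\<xi> k \<le> r" "r \<le> \<xi> (Suc k)" using lt r branch_spec(1)[OF k c0] branch_spec(2)[OF k c] by auto
  have "r \<noteq> branch k 0" using branch_spec(3)[OF k c0] big by auto
  then have "if even k then poly p r < 0 else poly p r > 0"
    using le_branch_iff[OF k c0 piece] r by (auto split: if_splits)
  moreover have "if even k then poly p r \<ge> c else poly p r \<le> c" using le_branch_iff[OF k c piece] lt by simp
  ultimately have pr: "poly p r = c" using big c by (auto split: if_splits)
  show False using branch_eq_iff[OF k c pr] piece lt by simp
qed

end

lemma (in zigzag) concat_replicate_level_set: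
  assumes c: "\<bar>c\<bar> \<le> 2" and E: "\<And>x. E x \<longleftrightarrow> poly p x = c"
    and m: "\<And>x. poly p x = c \<Longrightarrow> m x = (if poly (pderiv p) x = 0 then 2 else 1)"
  shows "concat (map (\<lambda>x. replicate (m x) x) (sorted_list_of_set {x. E x})) = map (\<lambda>k. branch k c) [0..<N]"
proof (rule concat_replicate_sorted_list_of_set)
  show "sorted (map (\<lambda>k. branch k c) [0..<N])"
    unfolding sorted_iff_nth_mono using branch_mono c by simp
  show "{x. E x} = set (map (\<lambda>k. branch k c) [0..<N])"
  proof (intro equalityI subsetI)
    fix x assume "x \<in> {x. E x}"
    then obtain k where "k < N" "branch k c = x" using E ex_branch_eq[OF c] by auto
    then show "x \<in> set (map (\<lambda>k. branch k c) [0..<N])" by auto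
  qed (use E branch_spec(3)[OF _ c] in auto)
  show "m x = count (mset (map (\<lambda>k. branch k c) [0..<N])) x" if "x \<in> set (map (\<lambda>k. branch k c) [0..<N])" for x
  proof -
    have px: "poly p x = c" using that branch_spec(3)[OF _ c] by auto
    show ?thesis unfolding count_mset_map_upt card_branch_preimage[OF c px] m[OF px] ..
  qed
qed

definition cpoly :: "real poly \<Rightarrow> complex \<Rightarrow> complex" where
  "cpoly p z = poly (map_poly complex_of_real p) z"

lemma map_poly_of_real_add: "map_poly complex_of_real (p + q) = map_poly of_real p + map_poly of_real q"
  by (rule poly_eqI) (simp add: coeff_map_poly)

lemma map_poly_of_real_diff: "map_poly complex_of_real (p - q) = map_poly of_real p - map_poly of_real q"
  by (rule poly_eqI) (simp add: coeff_map_poly)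

lemma map_poly_of_real_smult: "map_poly complex_of_real (smult a p) = smult (of_real a) (map_poly of_real p)"
  by (rule poly_eqI) (simp add: coeff_map_poly)

lemma map_poly_of_real_mult: "map_poly complex_of_real (p * q) = map_poly of_real p * map_poly of_real q"
  by (rule poly_eqI) (simp add: coeff_map_poly coeff_mult of_real_sum)

lemma cpoly_add: "cpoly (p + q) z = cpoly p z + cpoly q z"
  by (simp add: cpoly_def map_poly_of_real_add)

lemma cpoly_diff: "cpoly (p - q) z = cpoly p z - cpoly q z"
  by (simp add: cpoly_def map_poly_of_real_diff)

lemma cpoly_smult: "cpoly (smult a p) z = of_real a * cpoly p z"
  by (simp add: cpoly_def map_poly_of_real_smult)

lemma cpoly_mult: "cpoly (p * q) z = cpoly p z * cpoly q z"
  by (simp add: cpoly_def map_poly_of_real_mult)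

lemma cpoly_pCons: "cpoly [:a:] z = of_real a" "cpoly [:a, b:] z = of_real a + of_real b * z"
  by (simp_all add: cpoly_def map_poly_pCons)

lemma cpoly_of_real: "cpoly p (of_real x) = of_real (poly p x)"
  unfolding cpoly_def by (induction p) (auto simp: map_poly_pCons)

lemma col2_eq_0_iff: "col2 a b = 0 \<longleftrightarrow> a = 0 \<and> b = 0"
  by (auto simp: col2_def vec_eq_iff forall_2)

lemma matrix_vector_mult_col2:
  "(C::complex^2^2) *v col2 a b = col2 (C$1$1 * a + C$1$2 * b) (C$2$1 * a + C$2$2 * b)"
  by (simp add: col2_def vec_eq_iff forall_2 matrix_vector_mult_def sum_2)

lemma kernel_row:
  fixes u v a b :: complex
  assumes "u \<noteq> 0 \<or> v \<noteq> 0"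
  shows "u * a + v * b = 0 \<longleftrightarrow> (\<exists>t. a = t * v \<and> b = - t * u)"
proof
  assume h: "u * a + v * b = 0"
  show "\<exists>t. a = t * v \<and> b = - t * u"
  proof (cases "u = 0")
    case True
    then show ?thesis using h assms by (intro exI[of _ "a / v"]) simp
  next
    case False
    have "a = (- b / u) * v" using h False by (simp add: field_simps) (metis add.commute add_eq_0_iff2 mult.commute)
    then show ?thesis using False by (intro exI[of _ "- b / u"]) simp
  qed
qed (auto simp: algebra_simps)

lemma kernel_singular_2x2:
  fixes C :: "complex^2^2"
  assumes "det C = 0" "C \<noteq> 0"
  obtains a0 b0 where "a0 \<noteq> 0 \<or> b0 \<noteq> 0" "\<And>a b. C *v col2 a b = 0 \<longleftrightarrow> (\<exists>t. a = t * a0 \<and> b = t * b0)"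
proof -
  have d: "C$1$1 * C$2$2 - C$1$2 * C$2$1 = 0" using assms(1) by (simp add: det_2)
  have nz: "C$1$1 \<noteq> 0 \<or> C$1$2 \<noteq> 0 \<or> C$2$1 \<noteq> 0 \<or> C$2$2 \<noteq> 0"
    using assms(2) by (auto simp: vec_eq_iff forall_2)
  show ?thesis
  proof (cases "C$1$1 \<noteq> 0 \<or> C$1$2 \<noteq> 0")
    case True
    have "C *v col2 a b = 0 \<longleftrightarrow> (\<exists>t. a = t * C$1$2 \<and> b = t * - C$1$1)" for a b
    proof
      assume "C *v col2 a b = 0"
      then have "C$1$1 * a + C$1$2 * b = 0" by (simp add: matrix_vector_mult_col2 col2_eq_0_iff)
      then show "\<exists>t. a = t * C$1$2 \<and> b = t * - C$1$1" using kernel_row[OF True] by auto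
    next
      assume "\<exists>t. a = t * C$1$2 \<and> b = t * - C$1$1"
      then obtain t where t: "a = t * C$1$2" "b = t * - C$1$1" by blast
      have "C$2$1 * a + C$2$2 * b = - t * (C$1$1 * C$2$2 - C$1$2 * C$2$1)" using t by (simp add: algebra_simps)
      then show "C *v col2 a b = 0" using t d by (simp add: matrix_vector_mult_col2 col2_eq_0_iff algebra_simps)
    qed
    then show ?thesis using that[of "C$1$2" "- C$1$1"] True by auto
  next
    case False
    then have r1: "C$1$1 = 0" "C$1$2 = 0" by auto
    then have T: "C$2$1 \<noteq> 0 \<or> C$2$2 \<noteq> 0" using nz by auto
    have "C *v col2 a b = 0 \<longleftrightarrow> (\<exists>t. a = t * C$2$2 \<and> b = t * - C$2$1)" for a b
      using kernel_row[OF T, of a b] r1 by (auto simp: matrix_vector_mult_col2 col2_eq_0_iff)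
    then show ?thesis using that[of "C$2$2" "- C$2$1"] T by auto
  qed
qed

lemma kernel_nonsingular_2x2:
  fixes C :: "complex^2^2"
  assumes "det C \<noteq> 0" "C *v col2 a b = 0"
  shows "a = 0 \<and> b = 0"
proof -
  have d: "C$1$1 * C$2$2 - C$1$2 * C$2$1 \<noteq> 0" using assms(1) by (simp add: det_2)
  have e: "C$1$1 * a + C$1$2 * b = 0" "C$2$1 * a + C$2$2 * b = 0"
    using assms(2) by (simp_all add: matrix_vector_mult_col2 col2_eq_0_iff)
  have "a * (C$1$1 * C$2$2 - C$1$2 * C$2$1) = C$2$2 * (C$1$1 * a + C$1$2 * b) - C$1$2 * (C$2$1 * a + C$2$2 * b)"
    "b * (C$1$1 * C$2$2 - C$1$2 * C$2$1) = C$1$1 * (C$2$1 * a + C$2$2 * b) - C$2$1 * (C$1$1 * a + C$1$2 * b)"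
    by (simp_all add: algebra_simps)
  then show ?thesis using e d by simp
qed

text \<open>eig_mult is the dimension with respect to this scalar multiplication.\<close>

interpretation seq: vector_space "\<lambda>(c::complex) (y::nat \<Rightarrow> complex). (\<lambda>n. c * y n)"
  by unfold_locales (auto simp: fun_eq_iff algebra_simps)

lemma im_green_step:
  fixes y p z :: complex and r q w :: real
  shows "Im ((p + (of_real q - z * of_real w) * (y + p / of_real r)) * cnj (y + p / of_real r))
       = Im (p * cnj y) - Im z * w * (cmod (y + p / of_real r))\<^sup>2"
proof -
  define y' where "y' = y + p / of_real r"
  have "Im (p * cnj y') = Im (p * cnj y)" unfolding y'_def by (simp add: algebra_simps)
  moreover have "y' * cnj y' = of_real ((cmod y')\<^sup>2)" by (simp add: complex_mult_cnj cmod_power2)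
  moreover have "(p + (of_real q - z * of_real w) * y') * cnj y' = p * cnj y' + (of_real q - z * of_real w) * (y' * cnj y')"
    by (simp add: algebra_simps)
  ultimately show ?thesis by (simp add: y'_def)
qed

lemma minus_cid_mult: "(- cid) ** (C::complex^2^2) = - C"
  by (simp add: vec_eq_iff forall_2 matrix_matrix_mult_def sum_2 cid_def)

section \<open>The transfer matrix and its discriminant\<close>

lemma weighted_squares_sum_eq_0:
  fixes g w :: "nat \<Rightarrow> real"
  assumes "finite A" "\<And>k. k \<in> A \<Longrightarrow> w k > 0" "(\<Sum>k\<in>A. w k * (g k)\<^sup>2) = 0" "k \<in> A"
  shows "g k = 0"
proof -
  have "\<forall>k\<in>A. w k * (g k)\<^sup>2 = 0"
    using sum_nonneg_eq_0_iff[of A "\<lambda>k. w k * (g k)\<^sup>2"] assms(1-3) by (simp add: less_imp_le)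
  then show ?thesis using assms(2,4) by force
qed

definition quad_form :: "real \<Rightarrow> real \<Rightarrow> real \<Rightarrow> real \<Rightarrow> real \<Rightarrow> real \<Rightarrow> real" where
  "quad_form a b c d \<alpha> \<beta> = b * \<alpha>\<^sup>2 + (d - a) * \<alpha> * \<beta> - c * \<beta>\<^sup>2"

lemma quad_form_complete_square_c:
  assumes "a * d - b * c = 1"
  shows "- 4 * c * quad_form a b c d \<alpha> \<beta> = (2 * c * \<beta> - (d - a) * \<alpha>)\<^sup>2 + (4 - (a + d)\<^sup>2) * \<alpha>\<^sup>2"
  using assms unfolding quad_form_def by algebra

lemma quad_form_complete_square_b:
  assumes "a * d - b * c = 1"
  shows "4 * b * quad_form a b c d \<alpha> \<beta> = (2 * b * \<alpha> + (d - a) * \<beta>)\<^sup>2 - ((a + d)\<^sup>2 - 4) * \<beta>\<^sup>2"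
  using assms unfolding quad_form_def by algebra

locale sl_equation =
  fixes f q w :: "nat \<Rightarrow> real" and N :: nat
  assumes N_ge_2: "N \<ge> 2" and f_nonzero: "\<And>n. n \<le> N \<Longrightarrow> f n \<noteq> 0"
    and w_pos: "\<And>n. n \<in> {1..N} \<Longrightarrow> w n > 0"
begin

text \<open>Y a b n and P a b n are y_n and f_n \<Delta>y_n, as polynomials in \<lambda>, of the solution with
  y_0 = a and f_0 \<Delta>y_0 = b.\<close>

primrec YP :: "real \<Rightarrow> real \<Rightarrow> nat \<Rightarrow> real poly \<times> real poly" where
  "YP a b 0 = ([:a:], [:b:])"
| "YP a b (Suc n) = (let y = fst (YP a b n) + smult (1 / f n) (snd (YP a b n))
      in (y, snd (YP a b n) + [:q (Suc n), - w (Suc n):] * y))"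

definition Y :: "real \<Rightarrow> real \<Rightarrow> nat \<Rightarrow> real poly" where "Y a b n = fst (YP a b n)"
definition P :: "real \<Rightarrow> real \<Rightarrow> nat \<Rightarrow> real poly" where "P a b n = snd (YP a b n)"

lemma Y_0 [simp]: "Y a b 0 = [:a:]" and P_0 [simp]: "P a b 0 = [:b:]"
  by (simp_all add: Y_def P_def)

lemma Y_Suc: "Y a b (Suc n) = Y a b n + smult (1 / f n) (P a b n)"
  by (simp add: Y_def P_def Let_def)

lemma P_Suc: "P a b (Suc n) = P a b n + [:q (Suc n), - w (Suc n):] * Y a b (Suc n)"
  by (simp add: Y_def P_def Let_def)

lemma Y_1: "Y a b 1 = [:a + b / f 0:]"
  using Y_Suc[of a b 0] by simp

lemma YP_wronskian: "Y 1 0 n * P 0 1 n - Y 0 1 n * P 1 0 n = 1"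
proof (induction n)
  case 0 then show ?case by (simp add: one_pCons)
next
  case (Suc n)
  have step: "\<And>(y1::real poly) y2 p1 p2 e c. y1 * p2 - y2 * p1 = 1 \<Longrightarrow>
      (y1 + e * p1) * (p2 + c * (y2 + e * p2)) - (y2 + e * p2) * (p1 + c * (y1 + e * p1)) = 1"
    by algebra
  show ?case
    unfolding P_Suc[of 1 0] P_Suc[of 0 1] Y_Suc[of 1 0] Y_Suc[of 0 1]
    using step[OF Suc.IH, of "[:1 / f n:]" "[:q (Suc n), - w (Suc n):]"] by simp
qed

lemma poly_YP_wronskian: "poly (Y 1 0 n) x * poly (P 0 1 n) x - poly (Y 0 1 n) x * poly (P 1 0 n) x = 1"
  using arg_cong[OF YP_wronskian[of n], of "\<lambda>p. poly p x"] by simp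

definition lead_factor :: "nat \<Rightarrow> real" where "lead_factor n = (\<Prod>k\<in>{1..<n}. - w k / f k)"

lemma degree_coeff_YP:
  assumes "1 \<le> n" "n \<le> N"
  shows "degree (Y a b n) \<le> n - 1" "coeff (Y a b n) (n - 1) = (a + b / f 0) * lead_factor n"
    "degree (P a b n) \<le> n" "coeff (P a b n) n = - w n * (a + b / f 0) * lead_factor n"
proof -
  have "degree (Y a b n) \<le> n - 1 \<and> coeff (Y a b n) (n - 1) = (a + b / f 0) * lead_factor n
     \<and> degree (P a b n) \<le> n \<and> coeff (P a b n) n = - w n * (a + b / f 0) * lead_factor n"
    using assms
  proof (induction n rule: nat_induct_at_least)
    case base
    then show ?case using P_Suc[of a b 0] Y_1 by (simp add: lead_factor_def)
  next
    case (Suc n)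
    then have IH: "degree (Y a b n) \<le> n - 1" "coeff (Y a b n) (n - 1) = (a + b / f 0) * lead_factor n"
      "degree (P a b n) \<le> n" "coeff (P a b n) n = - w n * (a + b / f 0) * lead_factor n" by auto
    have L: "lead_factor (Suc n) = lead_factor n * (- w n / f n)"
      using Suc by (simp add: lead_factor_def prod.atLeastLessThan_Suc)
    have dY: "degree (Y a b (Suc n)) \<le> n" unfolding Y_Suc
      using IH by (intro degree_add_le) (auto intro: order.trans[OF degree_smult_le])
    have cY: "coeff (Y a b (Suc n)) n = (a + b / f 0) * lead_factor (Suc n)" unfolding Y_Suc
      using IH Suc(1) f_nonzero[of n] Suc.prems by (simp add: coeff_eq_0 L)
    have lin: "[:q (Suc n), - w (Suc n):] * Y a b (Suc n)
        = smult (q (Suc n)) (Y a b (Suc n)) + pCons 0 (smult (- w (Suc n)) (Y a b (Suc n)))"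
      by (simp add: mult_pCons_left)
    have dP: "degree (P a b (Suc n)) \<le> Suc n" unfolding P_Suc lin
      using IH dY by (intro degree_add_le)
        (auto intro!: degree_add_le order.trans[OF degree_smult_le] simp: degree_pCons_le)
    have cP: "coeff (P a b (Suc n)) (Suc n) = - w (Suc n) * (a + b / f 0) * lead_factor (Suc n)"
      unfolding P_Suc lin using IH dY by (simp add: coeff_eq_0 cY)
    show ?case using dY cY dP cP by simp
  qed
  then show "degree (Y a b n) \<le> n - 1" "coeff (Y a b n) (n - 1) = (a + b / f 0) * lead_factor n"
    "degree (P a b n) \<le> n" "coeff (P a b n) n = - w n * (a + b / f 0) * lead_factor n" by auto
qed

lemma pderiv_Y_Suc: "pderiv (Y a b (Suc n)) = pderiv (Y a b n) + smult (1 / f n) (pderiv (P a b n))"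
  by (simp add: Y_Suc pderiv_add pderiv_smult)

lemma pderiv_P_Suc: "pderiv (P a b (Suc n)) = pderiv (P a b n) + [:q (Suc n), - w (Suc n):] * pderiv (Y a b (Suc n))
   + smult (- w (Suc n)) (Y a b (Suc n))"
proof -
  have "pderiv [:q (Suc n), - w (Suc n):] = [:- w (Suc n):]" by (simp add: pderiv_pCons)
  then show ?thesis by (simp only: P_Suc[of a b n] pderiv_add pderiv_mult) (simp add: mult.commute)
qed

definition gram :: "real \<Rightarrow> real \<Rightarrow> real \<Rightarrow> real \<Rightarrow> nat \<Rightarrow> real \<Rightarrow> real" where
  "gram a b c d n x = (\<Sum>k\<in>{1..n}. w k * poly (Y a b k) x * poly (Y c d k) x)"

lemma pderiv_wronskian:
  "poly (Y a b n) x * poly (pderiv (P c d n)) x - poly (P a b n) x * poly (pderiv (Y c d n)) x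
     = - gram a b c d n x"
proof (induction n)
  case 0 then show ?case by (simp add: pderiv_pCons gram_def)
next
  case (Suc n)
  define y p dy dp y' e l where "y = poly (Y a b n) x" and "p = poly (P a b n) x"
    and "dy = poly (pderiv (Y c d n)) x" and "dp = poly (pderiv (P c d n)) x"
    and "y' = poly (Y c d (Suc n)) x" and "e = 1 / f n" and "l = q (Suc n) - w (Suc n) * x"
  have y1: "poly (Y a b (Suc n)) x = y + e * p" by (simp add: Y_Suc y_def p_def e_def)
  have p1: "poly (P a b (Suc n)) x = p + l * (y + e * p)"
    unfolding y1[symmetric] by (simp add: P_Suc p_def l_def algebra_simps)
  have dy1: "poly (pderiv (Y c d (Suc n))) x = dy + e * dp" by (simp add: pderiv_Y_Suc dy_def dp_def e_def)
  have dp1: "poly (pderiv (P c d (Suc n))) x = dp + l * (dy + e * dp) - w (Suc n) * y'"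
    by (simp add: pderiv_P_Suc dy1 l_def y'_def dp_def algebra_simps)
  have "poly (Y a b (Suc n)) x * poly (pderiv (P c d (Suc n))) x - poly (P a b (Suc n)) x * poly (pderiv (Y c d (Suc n))) x
     = (y * dp - p * dy) - w (Suc n) * poly (Y a b (Suc n)) x * y'"
    unfolding y1 p1 dy1 dp1 by (simp add: algebra_simps)
  also have "\<dots> = - gram a b c d (Suc n) x"
    using Suc.IH by (simp add: y_def p_def dy_def dp_def y'_def gram_def)
  finally show ?case .
qed

text \<open>Solving the four instances of the previous identity for the derivatives, using the
  Wronskian, gives the variation formula for the transfer matrix.\<close>

lemma pderiv_transfer_matrix:
  fixes x :: real
  defines "y0 \<equiv> poly (Y 1 0 N) x" and "y1 \<equiv> poly (Y 0 1 N) x"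
    and "p0 \<equiv> poly (P 1 0 N) x" and "p1 \<equiv> poly (P 0 1 N) x"
    and "S00 \<equiv> gram 1 0 1 0 N x" and "S01 \<equiv> gram 1 0 0 1 N x" and "S11 \<equiv> gram 0 1 0 1 N x"
  shows "poly (pderiv (Y 1 0 N)) x = y0 * S01 - y1 * S00"
    and "poly (pderiv (P 1 0 N)) x = p0 * S01 - p1 * S00"
    and "poly (pderiv (Y 0 1 N)) x = y0 * S11 - y1 * S01"
    and "poly (pderiv (P 0 1 N)) x = p0 * S11 - p1 * S01"
proof -
  have S10: "gram 0 1 1 0 N x = S01" unfolding S01_def gram_def by (intro sum.cong) auto
  have E1: "y0 * poly (pderiv (P 1 0 N)) x - p0 * poly (pderiv (Y 1 0 N)) x = - S00"
    and E2: "y1 * poly (pderiv (P 1 0 N)) x - p1 * poly (pderiv (Y 1 0 N)) x = - S01"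
    and E3: "y0 * poly (pderiv (P 0 1 N)) x - p0 * poly (pderiv (Y 0 1 N)) x = - S01"
    and E4: "y1 * poly (pderiv (P 0 1 N)) x - p1 * poly (pderiv (Y 0 1 N)) x = - S11"
    using pderiv_wronskian[of 1 0 N x 1 0] pderiv_wronskian[of 0 1 N x 1 0]
      pderiv_wronskian[of 1 0 N x 0 1] pderiv_wronskian[of 0 1 N x 0 1] S10
    by (simp_all add: assms)
  have W: "y0 * p1 - y1 * p0 = 1" unfolding assms by (rule poly_YP_wronskian)
  show "poly (pderiv (Y 1 0 N)) x = y0 * S01 - y1 * S00" using E1 E2 W by algebra
  show "poly (pderiv (P 1 0 N)) x = p0 * S01 - p1 * S00" using E1 E2 W by algebra
  show "poly (pderiv (Y 0 1 N)) x = y0 * S11 - y1 * S01" using E3 E4 W by algebra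
  show "poly (pderiv (P 0 1 N)) x = p0 * S11 - p1 * S01" using E3 E4 W by algebra
qed

text \<open>The entries of adj(M) \<Phi>(\<lambda>), where \<Phi> = [Y 1 0 N, Y 0 1 N; P 1 0 N, P 0 1 N] is the transfer
  matrix; for det M = 1 its trace disc M is the discriminant tr (M\<inverse> \<Phi>).\<close>

definition U11 :: "real^2^2 \<Rightarrow> real poly" where "U11 M = smult (M$2$2) (Y 1 0 N) - smult (M$1$2) (P 1 0 N)"
definition U12 :: "real^2^2 \<Rightarrow> real poly" where "U12 M = smult (M$2$2) (Y 0 1 N) - smult (M$1$2) (P 0 1 N)"
definition U21 :: "real^2^2 \<Rightarrow> real poly" where "U21 M = smult (M$1$1) (P 1 0 N) - smult (M$2$1) (Y 1 0 N)"
definition U22 :: "real^2^2 \<Rightarrow> real poly" where "U22 M = smult (M$1$1) (P 0 1 N) - smult (M$2$1) (Y 0 1 N)"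
definition disc :: "real^2^2 \<Rightarrow> real poly" where "disc M = U11 M + U22 M"

lemma det_U: "poly (U11 M) x * poly (U22 M) x - poly (U12 M) x * poly (U21 M) x = det M"
  using poly_YP_wronskian[of N x] by (simp add: U11_def U12_def U21_def U22_def det_2 algebra_simps)

lemma pderiv_disc:
  "poly (pderiv (disc M)) x =
    - (\<Sum>k\<in>{1..N}. w k * quad_form (poly (U11 M) x) (poly (U12 M) x) (poly (U21 M) x) (poly (U22 M) x)
          (poly (Y 1 0 k) x) (poly (Y 0 1 k) x))"
proof -
  have sum: "(\<Sum>k\<in>{1..N}. w k * quad_form a b c d (poly (Y 1 0 k) x) (poly (Y 0 1 k) x))
      = b * gram 1 0 1 0 N x + (d - a) * gram 1 0 0 1 N x - c * gram 0 1 0 1 N x" for a b c d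
    by (simp add: quad_form_def gram_def sum_distrib_left sum_subtractf sum.distrib power2_eq_square algebra_simps)
  show ?thesis
    unfolding sum by (simp add: disc_def U11_def U12_def U21_def U22_def pderiv_add pderiv_diff pderiv_smult
        pderiv_transfer_matrix algebra_simps)
qed

lemma Y_12_wronskian: "poly (Y 1 0 1) x * poly (Y 0 1 2) x - poly (Y 0 1 1) x * poly (Y 1 0 2) x = 1 / f 1"
proof -
  have "poly (Y 1 0 1) x * poly (Y 0 1 2) x - poly (Y 0 1 1) x * poly (Y 1 0 2) x =
     (poly (Y 1 0 1) x * poly (P 0 1 1) x - poly (Y 0 1 1) x * poly (P 1 0 1) x) / f 1"
    using Y_Suc[of 1 0 1] Y_Suc[of 0 1 1]
    by (simp add: numeral_2_eq_2 algebra_simps add_divide_distrib diff_divide_distrib)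
  then show ?thesis using poly_YP_wronskian[of 1 x] by simp
qed

text \<open>In the three lemmas below, det M = 1 turns the quadratic form in the derivative of the
  discriminant into a sum of squares whose sign is governed by 4 - (disc M)^2.\<close>

lemma U21_pderiv_disc_pos:
  assumes det: "det M = 1" and small: "\<bar>poly (disc M) x\<bar> < 2"
  shows "poly (U21 M) x * poly (pderiv (disc M)) x > 0"
proof -
  define a b c d where "a = poly (U11 M) x" and "b = poly (U12 M) x"
    and "c = poly (U21 M) x" and "d = poly (U22 M) x"
  have U: "a * d - b * c = 1" using det_U[of M x] det by (simp add: a_def b_def c_def d_def)
  have "\<bar>a + d\<bar> * \<bar>a + d\<bar> < 2 * 2"
    using small by (intro mult_strict_mono) (auto simp: a_def d_def disc_def)
  then have sq: "4 - (a + d)\<^sup>2 > 0" by (simp add: power2_eq_square)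
  define t where "t k = - 4 * c * quad_form a b c d (poly (Y 1 0 k) x) (poly (Y 0 1 k) x)" for k
  have t_nonneg: "t k \<ge> 0" for k
    unfolding t_def quad_form_complete_square_c[OF U] using sq by (intro add_nonneg_nonneg) auto
  have t_1: "t 1 > 0"
    unfolding t_def quad_form_complete_square_c[OF U] using sq Y_1[of 1 0] by (intro add_nonneg_pos) auto
  have "4 * (c * poly (pderiv (disc M)) x) = (\<Sum>k\<in>{1..N}. w k * t k)"
    unfolding pderiv_disc t_def by (simp add: a_def b_def c_def d_def sum_distrib_left sum_negf[symmetric] algebra_simps)
  also have "\<dots> > 0"
  proof (rule sum_pos2[of _ 1])
    show "1 \<in> {1..N}" using N_ge_2 by simp
    show "0 < w 1 * t 1" using w_pos[of 1] N_ge_2 t_1 by simp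
    show "0 \<le> w k * t k" if "k \<in> {1..N}" for k using w_pos[OF that] t_nonneg[of k] by simp
  qed simp
  finally show ?thesis by (simp add: c_def)
qed

lemma pderiv_disc_eq_0_iff:
  assumes det: "det M = 1" and edge: "\<bar>poly (disc M) x\<bar> = 2"
  shows "poly (pderiv (disc M)) x = 0 \<longleftrightarrow>
    poly (U12 M) x = 0 \<and> poly (U21 M) x = 0 \<and> poly (U11 M) x = poly (U22 M) x"
proof
  define a b c d where "a = poly (U11 M) x" and "b = poly (U12 M) x"
    and "c = poly (U21 M) x" and "d = poly (U22 M) x"
  have U: "a * d - b * c = 1" using det_U[of M x] det by (simp add: a_def b_def c_def d_def)
  have "a + d = 2 \<or> a + d = -2" using edge by (auto simp: a_def d_def disc_def)
  then have sq: "(a + d)\<^sup>2 = 4" by auto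
  define al be where "al k = poly (Y 1 0 k) x" and "be k = poly (Y 0 1 k) x" for k
  have D': "poly (pderiv (disc M)) x = - (\<Sum>k\<in>{1..N}. w k * quad_form a b c d (al k) (be k))"
    unfolding pderiv_disc by (simp add: a_def b_def c_def d_def al_def be_def)
  have sq_c: "(2 * c * be k - (d - a) * al k)\<^sup>2 = - 4 * c * quad_form a b c d (al k) (be k)" for k
    using quad_form_complete_square_c[OF U, of "al k" "be k"] sq by simp
  have sq_b: "(2 * b * al k + (d - a) * be k)\<^sup>2 = 4 * b * quad_form a b c d (al k) (be k)" for k
    using quad_form_complete_square_b[OF U, of "al k" "be k"] sq by simp
  assume crit: "poly (pderiv (disc M)) x = 0"
  have "(\<Sum>k\<in>{1..N}. w k * (2 * c * be k - (d - a) * al k)\<^sup>2) = 4 * (c * poly (pderiv (disc M)) x)"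
    unfolding D' sq_c by (simp add: sum_distrib_left sum_negf[symmetric] algebra_simps)
  then have e: "2 * c * be k - (d - a) * al k = 0" if "k \<in> {1..N}" for k
    using weighted_squares_sum_eq_0[of "{1..N}" w "\<lambda>k. 2 * c * be k - (d - a) * al k" k] w_pos that crit
    by simp
  have "2 * c * (al 1 * be 2 - be 1 * al 2) = al 1 * (2 * c * be 2 - (d - a) * al 2) - al 2 * (2 * c * be 1 - (d - a) * al 1)"
    by (simp add: algebra_simps)
  then have "2 * c * (1 / f 1) = 0"
    using e[of 1] e[of 2] N_ge_2 Y_12_wronskian[of x] by (simp add: al_def be_def)
  then have c0: "c = 0" using f_nonzero[of 1] N_ge_2 by simp
  have al1: "al 1 = 1" using Y_1[of 1 0] by (simp add: al_def)
  then have ad: "d = a" using e[of 1] N_ge_2 c0 by simp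
  have "(\<Sum>k\<in>{1..N}. w k * (2 * b * al k + (d - a) * be k)\<^sup>2) = - 4 * (b * poly (pderiv (disc M)) x)"
    unfolding D' sq_b by (simp add: sum_distrib_left sum_negf[symmetric] algebra_simps)
  then have "2 * b * al 1 + (d - a) * be 1 = 0"
    using weighted_squares_sum_eq_0[of "{1..N}" w "\<lambda>k. 2 * b * al k + (d - a) * be k" 1] w_pos crit N_ge_2
    by simp
  then have "b = 0" using ad al1 by simp
  then show "b = 0 \<and> c = 0 \<and> a = d" using c0 ad by simp
next
  assume "poly (U12 M) x = 0 \<and> poly (U21 M) x = 0 \<and> poly (U11 M) x = poly (U22 M) x"
  then show "poly (pderiv (disc M)) x = 0" unfolding pderiv_disc by (simp add: quad_form_def)
qed

lemma abs_disc_ge_2_if_U21_eq_0: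
  assumes "det M = 1" "poly (U21 M) x = 0"
  shows "\<bar>poly (disc M) x\<bar> \<ge> 2"
proof -
  have "poly (U11 M) x * poly (U22 M) x = 1" using det_U[of M x] assms by simp
  then have "(poly (disc M) x)\<^sup>2 - 2\<^sup>2 = (poly (U11 M) x - poly (U22 M) x)\<^sup>2"
    by (simp add: disc_def power2_eq_square algebra_simps)
  then have "(poly (disc M) x)\<^sup>2 \<ge> 2\<^sup>2" by (metis diff_ge_0_iff_ge zero_le_power2)
  then show ?thesis using abs_le_square_iff[of 2 "poly (disc M) x"] by simp
qed

definition yv :: "complex \<Rightarrow> complex \<Rightarrow> complex \<Rightarrow> nat \<Rightarrow> complex" where
  "yv a b z n = a * cpoly (Y 1 0 n) z + b * cpoly (Y 0 1 n) z"
definition pv :: "complex \<Rightarrow> complex \<Rightarrow> complex \<Rightarrow> nat \<Rightarrow> complex" where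
  "pv a b z n = a * cpoly (P 1 0 n) z + b * cpoly (P 0 1 n) z"

lemma yv_0 [simp]: "yv a b z 0 = a" and pv_0 [simp]: "pv a b z 0 = b"
  by (simp_all add: yv_def pv_def cpoly_def map_poly_pCons)

lemma yv_Suc: "yv a b z (Suc n) = yv a b z n + pv a b z n / of_real (f n)"
  by (simp add: yv_def pv_def Y_Suc cpoly_add cpoly_smult algebra_simps add_divide_distrib)

lemma pv_Suc: "pv a b z (Suc n) = pv a b z n + (of_real (q (Suc n)) - z * of_real (w (Suc n))) * yv a b z (Suc n)"
  unfolding pv_def yv_def P_Suc[of 1 0] P_Suc[of 0 1] cpoly_add cpoly_mult cpoly_pCons
  by (simp add: algebra_simps)

lemma f_nonzero_complex: "n \<le> N \<Longrightarrow> complex_of_real (f n) \<noteq> 0"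
  using f_nonzero by simp

definition sol :: "complex \<Rightarrow> complex \<Rightarrow> complex \<Rightarrow> nat \<Rightarrow> complex" where
  "sol a b z n = (if n \<le> N then yv a b z n else if n = Suc N then yv a b z N + pv a b z N / of_real (f N) else 0)"

lemma sol_quasi_deriv: "n \<le> N \<Longrightarrow> of_real (f n) * (sol a b z (Suc n) - sol a b z n) = pv a b z n"
  using f_nonzero_complex[of n] by (cases "n = N") (auto simp: sol_def yv_Suc)

lemma sol_solves: "sl_eq f q w N z (sol a b z)"
  unfolding sl_eq_def
proof
  fix n assume n: "n \<in> {1..N}"
  have sn: "Suc (n - 1) = n" using n by auto
  have e1: "of_real (f n) * (sol a b z (Suc n) - sol a b z n) = pv a b z n"
    using n by (intro sol_quasi_deriv) auto
  have e2: "of_real (f (n - 1)) * (sol a b z n - sol a b z (n - 1)) = pv a b z (n - 1)"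
    using sol_quasi_deriv[of "n - 1" a b z] n sn by auto
  have pn: "pv a b z n = pv a b z (n - 1) + (of_real (q n) - z * of_real (w n)) * yv a b z n"
    using pv_Suc[of a b z "n - 1"] sn by simp
  have ln: "sol a b z n = yv a b z n" using n by (simp add: sol_def)
  show "- (complex_of_real (f n) * (sol a b z (Suc n) - sol a b z n)
      - complex_of_real (f (n - 1)) * (sol a b z n - sol a b z (n - 1)))
      + complex_of_real (q n) * sol a b z n = z * complex_of_real (w n) * sol a b z n"
    by (simp only: e1 e2) (simp add: pn ln algebra_simps)
qed

lemma solution_eq_sol:
  assumes sl: "sl_eq f q w N z y" and supp: "\<forall>n>Suc N. y n = 0"
  shows "y = sol (y 0) (of_real (f 0) * (y 1 - y 0)) z"
proof -
  define a b where "a = y 0" and "b = of_real (f 0) * (y 1 - y 0)"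
  have ind: "n \<le> N \<longrightarrow> y n = yv a b z n \<and> of_real (f n) * (y (Suc n) - y n) = pv a b z n" for n
  proof (induction n)
    case 0 then show ?case by (simp add: a_def b_def)
  next
    case (Suc n)
    show ?case
    proof
      assume sn: "Suc n \<le> N"
      then have IH: "y n = yv a b z n" "of_real (f n) * (y (Suc n) - y n) = pv a b z n" using Suc by auto
      have "y (Suc n) - y n = pv a b z n / of_real (f n)"
        using IH(2) f_nonzero_complex[of n] sn by (simp add: field_simps)
      then have ys: "y (Suc n) = yv a b z (Suc n)" using IH(1) by (simp add: yv_Suc algebra_simps)
      have "Suc n \<in> {1..N}" using sn by simp
      from bspec[OF sl[unfolded sl_eq_def] this]
      have "of_real (f (Suc n)) * (y (Suc (Suc n)) - y (Suc n))
          = pv a b z n + (of_real (q (Suc n)) - z * of_real (w (Suc n))) * y (Suc n)"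
        using IH(2) by (simp add: algebra_simps)
      then show "y (Suc n) = yv a b z (Suc n) \<and> of_real (f (Suc n)) * (y (Suc (Suc n)) - y (Suc n)) = pv a b z (Suc n)"
        using ys by (simp add: pv_Suc)
    qed
  qed
  have last: "y (Suc N) = y N + pv a b z N / of_real (f N)"
    using ind[of N] f_nonzero_complex[of N] by (simp add: field_simps)
  have "y n = sol a b z n" for n
  proof -
    consider "n \<le> N" | "n = Suc N" | "n > Suc N" by linarith
    then show ?thesis
      by cases (use ind[of n] ind[of N] last supp in \<open>auto simp: sol_def\<close>)
  qed
  then have "y = sol a b z" ..
  then show ?thesis unfolding a_def b_def .
qed

definition transfer :: "complex \<Rightarrow> complex^2^2" where
  "transfer z = (\<chi> i j. if i = 1 then (if j = 1 then cpoly (Y 1 0 N) z else cpoly (Y 0 1 N) z)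
                    else (if j = 1 then cpoly (P 1 0 N) z else cpoly (P 0 1 N) z))"

lemma transfer_col2: "transfer z *v col2 a b = col2 (yv a b z N) (pv a b z N)"
  by (simp add: matrix_vector_mult_col2 transfer_def yv_def pv_def algebra_simps)

lemma sol_boundary_values:
  "col2 (sol a b z 0) (of_real (f 0) * (sol a b z 1 - sol a b z 0)) = col2 a b"
  "col2 (sol a b z N) (of_real (f N) * (sol a b z (Suc N) - sol a b z N)) = transfer z *v col2 a b"
  using sol_quasi_deriv[of 0 a b z] sol_quasi_deriv[of N a b z] by (simp_all add: sol_def transfer_col2)

lemma bc_holds_sol: "bc_holds f N A B (sol a b z) \<longleftrightarrow> (A + B ** transfer z) *v col2 a b = 0"
  unfolding bc_holds_def sol_boundary_values
  by (simp only: matrix_vector_mult_add_rdistrib matrix_vector_mul_assoc)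

lemma sol_space_eq: "sol_space f q w N A B z = {sol a b z | a b. (A + B ** transfer z) *v col2 a b = 0}"
proof (intro equalityI subsetI)
  fix y assume "y \<in> sol_space f q w N A B z"
  then have y: "sl_eq f q w N z y" "\<forall>n>Suc N. y n = 0" "bc_holds f N A B y" by (auto simp: sol_space_def)
  define a b where "a = y 0" and "b = of_real (f 0) * (y 1 - y 0)"
  have ye: "y = sol a b z" unfolding a_def b_def by (rule solution_eq_sol[OF y(1,2)])
  then have "(A + B ** transfer z) *v col2 a b = 0" using y(3) bc_holds_sol by metis
  then show "y \<in> {sol a b z | a b. (A + B ** transfer z) *v col2 a b = 0}" using ye by blast
next
  fix y assume "y \<in> {sol a b z | a b. (A + B ** transfer z) *v col2 a b = 0}"
  then obtain a b where "y = sol a b z" "(A + B ** transfer z) *v col2 a b = 0" by blast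
  then show "y \<in> sol_space f q w N A B z" using sol_solves bc_holds_sol by (simp add: sol_space_def sol_def)
qed

lemma sol_scale: "sol (t * a) (t * b) z = (\<lambda>n. t * sol a b z n)"
  by (rule ext) (simp add: sol_def yv_def pv_def algebra_simps add_divide_distrib)

lemma sol_add: "sol (a1 + a2) (b1 + b2) z = sol a1 b1 z + sol a2 b2 z"
  by (rule ext) (simp add: sol_def yv_def pv_def algebra_simps add_divide_distrib)

lemma sol_eq_0_iff: "sol a b z = 0 \<longleftrightarrow> a = 0 \<and> b = 0"
proof
  assume h: "sol a b z = 0"
  have a: "a = 0" using fun_cong[OF h, of 0] by (simp add: sol_def)
  have "sol a b z 1 = a + b / of_real (f 0)" using N_ge_2 by (simp add: sol_def yv_Suc[of a b z 0, simplified])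
  then have "b / of_real (f 0) = 0" using fun_cong[OF h, of 1] a by simp
  then show "a = 0 \<and> b = 0" using a f_nonzero_complex[of 0] by auto
qed (auto simp: fun_eq_iff sol_def yv_def pv_def)

lemma is_eigenvalue_iff_det: "is_eigenvalue f q w N A B z \<longleftrightarrow> det (A + B ** transfer z) = 0"
proof
  assume "is_eigenvalue f q w N A B z"
  then obtain a b where "(A + B ** transfer z) *v col2 a b = 0" "\<not> (a = 0 \<and> b = 0)"
    unfolding is_eigenvalue_def sol_space_eq using sol_eq_0_iff by blast
  then show "det (A + B ** transfer z) = 0" using kernel_nonsingular_2x2 by blast
next
  assume d: "det (A + B ** transfer z) = 0"
  obtain a0 b0 where "a0 \<noteq> 0 \<or> b0 \<noteq> 0" "(A + B ** transfer z) *v col2 a0 b0 = 0"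
  proof (cases "A + B ** transfer z = 0")
    case True then show ?thesis using that[of 1 0] by simp
  next
    case False then show ?thesis using kernel_singular_2x2[OF d False] that by (metis mult_1)
  qed
  then have "sol a0 b0 z \<in> sol_space f q w N A B z" "sol a0 b0 z \<noteq> 0"
    unfolding sol_space_eq using sol_eq_0_iff by auto
  then show "is_eigenvalue f q w N A B z" by (auto simp: is_eigenvalue_def)
qed

lemma eig_mult_eq_1:
  assumes "det (A + B ** transfer z) = 0" "A + B ** transfer z \<noteq> 0"
  shows "eig_mult f q w N A B z = 1"
proof -
  obtain a0 b0 where ab: "a0 \<noteq> 0 \<or> b0 \<noteq> 0"
    "\<And>a b. (A + B ** transfer z) *v col2 a b = 0 \<longleftrightarrow> (\<exists>t. a = t * a0 \<and> b = t * b0)"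
    using kernel_singular_2x2[OF assms] by blast
  define v where "v = sol a0 b0 z"
  have "sol_space f q w N A B z = range (\<lambda>t. (\<lambda>n. t * v n))"
    unfolding sol_space_eq v_def ab(2) by (auto simp: sol_scale[symmetric])
  also have "\<dots> = seq.span {v}" by (simp add: seq.span_singleton)
  finally have "eig_mult f q w N A B z = seq.dim (seq.span {v})" by (simp add: eig_mult_def)
  also have "\<dots> = 1"
  proof -
    have "v \<noteq> 0" using sol_eq_0_iff ab(1) by (simp add: v_def)
    then show ?thesis using seq.dim_span_eq_card_independent[of "{v}"] by simp
  qed
  finally show ?thesis .
qed

lemma sols_eq_span: "{sol a b z | a b. True} = seq.span {sol 1 0 z, sol 0 1 z}"
proof -
  have decomp: "sol a b z = (\<lambda>n. a * sol 1 0 z n) + (\<lambda>n. b * sol 0 1 z n)" for a b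
    using sol_add[of "a * 1" "b * 0" "a * 0" "b * 1" z] sol_scale[of a 1 0 z] sol_scale[of b 0 1 z] by simp
  have "seq.subspace {sol a b z | a b. True}"
    unfolding seq.subspace_def
  proof (intro conjI ballI allI)
    show "0 \<in> {sol a b z | a b. True}" using sol_eq_0_iff[of 0 0 z] by auto
    fix x y assume "x \<in> {sol a b z | a b. True}" "y \<in> {sol a b z | a b. True}"
    then obtain a1 b1 a2 b2 where "x = sol a1 b1 z" "y = sol a2 b2 z" by blast
    then have "x + y = sol (a1 + a2) (b1 + b2) z" using sol_add[of a1 a2 b1 b2 z] by simp
    then show "x + y \<in> {sol a b z | a b. True}" by blast
  next
    fix c x assume "x \<in> {sol a b z | a b. True}"
    then obtain a b where "x = sol a b z" by blast
    then have "(\<lambda>n. c * x n) = sol (c * a) (c * b) z" using sol_scale[of c a b z] by simp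
    then show "(\<lambda>n. c * x n) \<in> {sol a b z | a b. True}" by blast
  qed
  then have "seq.span {sol 1 0 z, sol 0 1 z} \<subseteq> {sol a b z | a b. True}"
    by (intro seq.span_minimal) auto
  moreover have "sol a b z \<in> seq.span {sol 1 0 z, sol 0 1 z}" for a b
    unfolding decomp[of a b] by (intro seq.span_add seq.span_scale seq.span_base) auto
  ultimately show ?thesis by blast
qed

lemma eig_mult_eq_2:
  assumes "A + B ** transfer z = 0"
  shows "eig_mult f q w N A B z = 2"
proof -
  define u v where "u = sol 1 0 z" and "v = sol 0 1 z"
  have "eig_mult f q w N A B z = seq.dim (seq.span {u, v})"
    unfolding eig_mult_def sol_space_eq assms u_def v_def sols_eq_span[symmetric] by simp
  also have "\<dots> = 2"
  proof -
    have "u \<notin> seq.span {v}"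
    proof
      assume "u \<in> seq.span {v}"
      then obtain k where "u = (\<lambda>n. k * v n)" by (auto simp: seq.span_singleton)
      then have "u 0 = k * v 0" by simp
      then show False by (simp add: u_def v_def sol_def)
    qed
    moreover have "v \<noteq> 0" using sol_eq_0_iff by (simp add: v_def)
    ultimately have "seq.independent {u, v}" "u \<noteq> v"
      using seq.independent_insertI[of u "{v}"] seq.span_base[of v "{v}"] by auto
    then show ?thesis using seq.dim_span_eq_card_independent by simp
  qed
  finally show ?thesis .
qed

lemma green_identity:
  "Im (pv a b z n * cnj (yv a b z n)) = Im (b * cnj a) - Im z * (\<Sum>k\<in>{1..n}. w k * (cmod (yv a b z k))\<^sup>2)"
proof (induction n)
  case 0 then show ?case by simp
next
  case (Suc n)
  have "Im (pv a b z (Suc n) * cnj (yv a b z (Suc n)))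
      = Im (pv a b z n * cnj (yv a b z n)) - Im z * w (Suc n) * (cmod (yv a b z (Suc n)))\<^sup>2"
    unfolding pv_Suc unfolding yv_Suc by (rule im_green_step)
  then show ?case using Suc by (simp add: algebra_simps)
qed

lemma nonreal_solution_trivial:
  assumes "Im z \<noteq> 0" and "Im (pv a b z N * cnj (yv a b z N)) = Im (b * cnj a)"
  shows "a = 0 \<and> b = 0"
proof -
  have "(\<Sum>k\<in>{1..N}. w k * (cmod (yv a b z k))\<^sup>2) = 0" using green_identity[of a b z N] assms by simp
  then have y0: "yv a b z k = 0" if "k \<in> {1..N}" for k
    using weighted_squares_sum_eq_0[of "{1..N}" w "\<lambda>k. cmod (yv a b z k)" k] w_pos that by simp
  have y1: "yv a b z 1 = 0" and y2: "yv a b z 2 = 0" using y0 N_ge_2 by auto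
  have "yv a b z 2 = yv a b z 1 + pv a b z 1 / of_real (f 1)" using yv_Suc[of a b z 1] by (simp add: numeral_2_eq_2)
  then have "pv a b z 1 = 0" using y1 y2 f_nonzero_complex[of 1] N_ge_2 by simp
  then have b0: "b = 0" using pv_Suc[of a b z 0] y1 by simp
  then show ?thesis using yv_Suc[of a b z 0] y1 by simp
qed

lemma cpoly_disc: "cpoly (disc M) z = of_real (M$2$2) * cpoly (Y 1 0 N) z - of_real (M$1$2) * cpoly (P 1 0 N) z
   - of_real (M$2$1) * cpoly (Y 0 1 N) z + of_real (M$1$1) * cpoly (P 0 1 N) z"
  by (simp add: disc_def U11_def U22_def cpoly_add cpoly_diff cpoly_smult)

lemma cpoly_YP_wronskian: "cpoly (Y 1 0 N) z * cpoly (P 0 1 N) z - cpoly (Y 0 1 N) z * cpoly (P 1 0 N) z = 1"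
proof -
  have "cpoly (Y 1 0 N * P 0 1 N - Y 0 1 N * P 1 0 N) z = 1" by (simp add: YP_wronskian cpoly_def)
  then show ?thesis by (simp only: cpoly_diff cpoly_mult)
qed

text \<open>If disc M vanishes at z then z is an eigenvalue of the boundary condition [iM | -I], whose
  eigenvalues are real by the Green identity.\<close>

lemma disc_roots_real:
  assumes det: "det M = 1" and root: "cpoly (disc M) z = 0"
  shows "Im z = 0"
proof (rule ccontr)
  assume imz: "Im z \<noteq> 0"
  define A :: "complex^2^2" where "A = (\<chi> i j. \<i> * of_real (M$i$j))"
  have dM: "complex_of_real (M$1$1 * M$2$2 - M$1$2 * M$2$1) = 1" using det by (simp add: det_2)
  have "det (A + (- cid) ** transfer z) = (\<i> * \<i>) * of_real (M$1$1 * M$2$2 - M$1$2 * M$2$1)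
      - \<i> * cpoly (disc M) z
      + (cpoly (Y 1 0 N) z * cpoly (P 0 1 N) z - cpoly (Y 0 1 N) z * cpoly (P 1 0 N) z)"
    unfolding minus_cid_mult cpoly_disc by (simp add: det_2 A_def transfer_def algebra_simps)
  also have "\<dots> = 0" by (simp only: dM root cpoly_YP_wronskian) simp
  finally have "is_eigenvalue f q w N A (- cid) z" using is_eigenvalue_iff_det by simp
  then obtain y where y: "y \<in> sol_space f q w N A (- cid) z" "y \<noteq> 0" by (auto simp: is_eigenvalue_def)
  then obtain a b where y_eq: "y = sol a b z" and ab: "(A + (- cid) ** transfer z) *v col2 a b = 0"
    unfolding sol_space_eq by blast
  have nz: "\<not> (a = 0 \<and> b = 0)" using y(2) y_eq sol_eq_0_iff by simp
  have "yv a b z N = \<i> * (of_real (M$1$1) * a + of_real (M$1$2) * b)"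
    "pv a b z N = \<i> * (of_real (M$2$1) * a + of_real (M$2$2) * b)"
    using ab unfolding minus_cid_mult
    by (simp_all add: matrix_vector_mult_col2 col2_eq_0_iff A_def transfer_def yv_def pv_def algebra_simps)
  then have "Im (pv a b z N * cnj (yv a b z N)) = (M$1$1 * M$2$2 - M$1$2 * M$2$1) * Im (b * cnj a)"
    by (simp add: algebra_simps)
  then show False using nonreal_solution_trivial[OF imz] nz det by (simp add: det_2)
qed

section \<open>The discriminant is a zigzag polynomial\<close>

lemma lead_factor_sign: "(-1) ^ (N - 1) * lead_factor N = (\<Prod>k\<in>{1..<N}. w k) * (\<Prod>k\<in>{1..<N}. 1 / f k)"
proof -
  have "lead_factor N = (\<Prod>k\<in>{1..<N}. (-1) * (w k * (1 / f k)))"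
    unfolding lead_factor_def by (intro prod.cong) auto
  also have "\<dots> = (\<Prod>k\<in>{1..<N}. (-1::real)) * (\<Prod>k\<in>{1..<N}. w k * (1 / f k))"
    by (rule prod.distrib)
  also have "(\<Prod>k\<in>{1..<N}. w k * (1 / f k)) = (\<Prod>k\<in>{1..<N}. w k) * (\<Prod>k\<in>{1..<N}. 1 / f k)"
    by (rule prod.distrib)
  finally show ?thesis by simp
qed

lemma lead_factor_nonzero: "lead_factor N \<noteq> 0"
proof -
  have "- w k / f k \<noteq> 0" if "k \<in> {1..<N}" for k using f_nonzero[of k] w_pos[of k] that by auto
  then show ?thesis unfolding lead_factor_def by (simp add: prod_zero_iff)
qed

lemma sign_lead_term:
  "(-1) ^ N * (- w N * c * lead_factor N) = (\<Prod>k\<in>{1..N}. w k) * (\<Prod>k<N. 1 / f k) * (f 0 * c)"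
proof -
  have s: "(-1::real) ^ N = - ((-1) ^ (N - 1))" using N_ge_2 by (cases N) auto
  have "{1..N} = insert N {1..<N}" "{..<N} = insert 0 {1..<N}" using N_ge_2 by auto
  then have pw: "(\<Prod>k\<in>{1..N}. w k) = w N * (\<Prod>k\<in>{1..<N}. w k)"
    and pf: "(\<Prod>k<N. 1 / f k) = 1 / f 0 * (\<Prod>k\<in>{1..<N}. 1 / f k)" by simp_all
  have "(-1) ^ N * (- w N * c * lead_factor N) = w N * c * ((-1) ^ (N - 1) * lead_factor N)"
    by (simp add: s)
  also have "\<dots> = w N * c * ((\<Prod>k\<in>{1..<N}. w k) * (\<Prod>k\<in>{1..<N}. 1 / f k))"
    by (simp only: lead_factor_sign)
  also have "\<dots> = (\<Prod>k\<in>{1..N}. w k) * (\<Prod>k<N. 1 / f k) * (f 0 * c)"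
    unfolding pw pf using f_nonzero[of 0] by simp
  finally show ?thesis .
qed

lemma degree_disc_le: "degree (disc M) \<le> N"
  using degree_coeff_YP[of N 1 0] degree_coeff_YP[of N 0 1] N_ge_2 unfolding disc_def U11_def U22_def
  by (intro degree_add_le degree_diff_le) (auto intro: order.trans[OF degree_smult_le])

lemma degree_U21_le: "degree (U21 M) \<le> N"
  using degree_coeff_YP[of N 1 0] N_ge_2 unfolding U21_def
  by (intro degree_diff_le) (auto intro: order.trans[OF degree_smult_le])

lemma coeff_Y_N: "coeff (Y a b N) N = 0"
  using degree_coeff_YP(1)[of N a b] N_ge_2 by (intro coeff_eq_0) auto

lemma sign_lead_coeff_disc:
  "(-1) ^ N * coeff (disc M) N = (\<Prod>k\<in>{1..N}. w k) * (\<Prod>k<N. 1 / f k) * (M$1$1 - f 0 * M$1$2)"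
proof -
  have "coeff (disc M) N = - w N * (M$1$1 / f 0 - M$1$2) * lead_factor N"
    using degree_coeff_YP(4)[of N 1 0] degree_coeff_YP(4)[of N 0 1] N_ge_2
    by (simp add: disc_def U11_def U22_def coeff_Y_N algebra_simps)
  moreover have "f 0 * (M$1$1 / f 0 - M$1$2) = M$1$1 - f 0 * M$1$2"
    using f_nonzero[of 0] by (simp add: field_simps)
  ultimately show ?thesis by (simp only: sign_lead_term)
qed

lemma sign_lead_coeff_U21:
  "(-1) ^ N * coeff (U21 M) N = (\<Prod>k\<in>{1..N}. w k) * (\<Prod>k<N. 1 / f k) * (f 0 * M$1$1)"
proof -
  have "coeff (U21 M) N = - w N * M$1$1 * lead_factor N"
    using degree_coeff_YP(4)[of N 1 0] N_ge_2 by (simp add: U21_def coeff_Y_N)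
  then show ?thesis using sign_lead_term by simp
qed

lemma U21_if_M11_eq_0:
  assumes "M$1$1 = 0"
  shows "degree (U21 M) \<le> N - 1" "coeff (U21 M) (N - 1) = - M$2$1 * lead_factor N"
  using degree_coeff_YP(1,2)[of N 1 0] N_ge_2 assms unfolding U21_def
  by (auto intro: order.trans[OF degree_smult_le])

lemma disc_zigzag:
  assumes det: "det M = 1" and pos: "M$1$1 - f 0 * M$1$2 > 0" and f_prod: "(\<Prod>k<N. 1 / f k) > 0"
  obtains \<xi> where "zigzag (disc M) N \<xi>"
proof (rule zigzag_exists)
  have w: "(\<Prod>k\<in>{1..N}. w k) > 0" using w_pos by (intro prod_pos) auto
  have c: "(-1) ^ N * coeff (disc M) N > 0" unfolding sign_lead_coeff_disc using w f_prod pos by simp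
  then show deg: "degree (disc M) = N" using degree_disc_le[of M] le_degree[of "disc M" N] by fastforce
  show N1: "N \<ge> 1" using N_ge_2 by simp
  show crit: "poly (pderiv (disc M)) x \<noteq> 0" if "\<bar>poly (disc M) x\<bar> < 2" for x
    using U21_pderiv_disc_pos[OF det that] by auto
  have "disc M \<noteq> 0" using deg N1 by auto
  moreover have "Im z = 0" if "poly (map_poly complex_of_real (disc M)) z = 0" for z
    using disc_roots_real[OF det] that by (simp add: cpoly_def)
  ultimately show "card {x. poly (disc M) x = 0} = N"
    using card_roots_eq_degree_if_real_simple[of "disc M"] crit deg by force
  show "\<exists>R. \<forall>x\<le>R. poly (disc M) x > 2" using poly_minfty_gt[of "disc M" 2] deg N1 c by simp
  show "\<exists>R. \<forall>x\<ge>R. \<bar>poly (disc M) x\<bar> > 2" using poly_abs_pinfty_gt[of "disc M" 2] deg N1 by simp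
qed

lemma transfer_of_real:
  "transfer (of_real x) $ 1 $ 1 = of_real (poly (Y 1 0 N) x)" "transfer (of_real x) $ 1 $ 2 = of_real (poly (Y 0 1 N) x)"
  "transfer (of_real x) $ 2 $ 1 = of_real (poly (P 1 0 N) x)" "transfer (of_real x) $ 2 $ 2 = of_real (poly (P 0 1 N) x)"
  by (simp_all add: transfer_def cpoly_of_real)

lemma poly_disc: "poly (disc M) x = M$2$2 * poly (Y 1 0 N) x - M$1$2 * poly (P 1 0 N) x
    - M$2$1 * poly (Y 0 1 N) x + M$1$1 * poly (P 0 1 N) x"
  by (simp add: disc_def U11_def U22_def)

lemma det_bc_scaled:
  assumes "det M = 1"
  shows "det ((\<chi> i j. s * of_real (M$i$j)) + (- cid) ** transfer (of_real x)) = s * s - s * of_real (poly (disc M) x) + 1"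
proof -
  have "det ((\<chi> i j. s * of_real (M$i$j)) + (- cid) ** transfer (of_real x))
      = s * s * of_real (det M) - s * of_real (poly (disc M) x)
        + of_real (poly (Y 1 0 N) x * poly (P 0 1 N) x - poly (Y 0 1 N) x * poly (P 1 0 N) x)"
    unfolding minus_cid_mult poly_disc by (simp add: det_2 transfer_of_real algebra_simps)
  then show ?thesis using assms by (simp add: poly_YP_wronskian)
qed

lemma bc_scaled_eq_0_iff:
  "(\<chi> i j. complex_of_real (s * M$i$j)) + (- cid) ** transfer (of_real x) = 0 \<longleftrightarrow>
    poly (Y 1 0 N) x = s * M$1$1 \<and> poly (Y 0 1 N) x = s * M$1$2 \<and> poly (P 1 0 N) x = s * M$2$1 \<and> poly (P 0 1 N) x = s * M$2$2"
  unfolding minus_cid_mult by (simp add: vec_eq_iff forall_2 transfer_of_real) (auto simp flip: of_real_mult)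

lemma transfer_eq_smult_iff:
  assumes det: "det M = 1" and s: "s = 1 \<or> s = -1" and edge: "poly (disc M) x = 2 * s"
  shows "(poly (Y 1 0 N) x = s * M$1$1 \<and> poly (Y 0 1 N) x = s * M$1$2 \<and> poly (P 1 0 N) x = s * M$2$1
      \<and> poly (P 0 1 N) x = s * M$2$2) \<longleftrightarrow> poly (pderiv (disc M)) x = 0"
proof -
  have d: "M$1$1 * M$2$2 - M$1$2 * M$2$1 = 1" using det by (simp add: det_2)
  have "\<bar>poly (disc M) x\<bar> = 2" using s edge by auto
  then have "poly (pderiv (disc M)) x = 0 \<longleftrightarrow> poly (U12 M) x = 0 \<and> poly (U21 M) x = 0 \<and> poly (U11 M) x = s \<and> poly (U22 M) x = s"
    using pderiv_disc_eq_0_iff[OF det] edge by (auto simp: disc_def)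
  also have "\<dots> \<longleftrightarrow> (poly (Y 1 0 N) x = s * M$1$1 \<and> poly (Y 0 1 N) x = s * M$1$2 \<and> poly (P 1 0 N) x = s * M$2$1
      \<and> poly (P 0 1 N) x = s * M$2$2)"
    (is "?U \<longleftrightarrow> ?\<Phi>")
  proof
    assume ?U
    then show ?\<Phi> using d unfolding U11_def U12_def U21_def U22_def by simp algebra
  next
    assume ?\<Phi>
    then show ?U using d unfolding U11_def U12_def U21_def U22_def by (simp add: algebra_simps)
  qed
  finally show ?thesis ..
qed

lemma phase_mat_eq: "phase_mat \<gamma> M = (\<chi> i j. cis \<gamma> * of_real (M$i$j))"
  by (simp add: phase_mat_def cis_conv_exp mult.commute)

lemma det_bc_phase:
  assumes "det M = 1"
  shows "det (phase_mat \<gamma> M + (- cid) ** transfer (of_real x)) = cis \<gamma> * of_real (2 * cos \<gamma> - poly (disc M) x)"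
proof -
  define s where "s = cis \<gamma>"
  have "s * s + 1 = s * (s + cnj s)" using complex_mult_cnj[of s] by (simp add: s_def cmod_power2 algebra_simps)
  also have "s + cnj s = of_real (2 * cos \<gamma>)" by (simp add: s_def complex_eq_iff)
  finally have "s * s + 1 = s * of_real (2 * cos \<gamma>)" .
  then show ?thesis unfolding phase_mat_eq det_bc_scaled[OF assms] s_def[symmetric] by (simp add: algebra_simps)
qed

lemma bc_phase_nonzero:
  assumes det: "det M = 1" and sin: "sin \<gamma> \<noteq> 0"
  shows "phase_mat \<gamma> M + (- cid) ** transfer (of_real x) \<noteq> 0"
proof
  assume h: "phase_mat \<gamma> M + (- cid) ** transfer (of_real x) = 0"
  have "M$i$j = 0" for i j
  proof -
    have "Im (transfer (of_real x) $ i $ j) = 0" by (simp add: transfer_def cpoly_of_real)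
    then have "Im ((phase_mat \<gamma> M + (- cid) ** transfer (of_real x)) $ i $ j) = sin \<gamma> * M$i$j"
      unfolding phase_mat_eq minus_cid_mult by simp
    then show ?thesis using h sin by simp
  qed
  then show False using det by (simp add: det_2)
qed

lemma det_bc_TK: "det (TK_A K + TK_B K ** transfer (of_real x)) = - of_real (poly (U21 K) x)"
  by (simp add: det_2 TK_A_def TK_B_def matrix_matrix_mult_def sum_2 transfer_of_real U21_def algebra_simps)

lemma bc_TK_nonzero: "TK_A K + TK_B K ** transfer (of_real x) \<noteq> 0"
proof
  assume "TK_A K + TK_B K ** transfer (of_real x) = 0"
  then have "(TK_A K + TK_B K ** transfer (of_real x))$1$2 = 0" by simp
  then show False by (simp add: TK_A_def TK_B_def matrix_matrix_mult_def sum_2)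
qed

lemma eig_list_eq_branches:
  assumes Z: "zigzag (disc M) N \<xi>" and c: "\<bar>c\<bar> \<le> 2"
    and eig: "\<And>x. det (A + B ** transfer (of_real x)) = 0 \<longleftrightarrow> poly (disc M) x = c"
    and zero: "\<And>x. poly (disc M) x = c \<Longrightarrow> A + B ** transfer (of_real x) = 0 \<longleftrightarrow> poly (pderiv (disc M)) x = 0"
  shows "eig_list f q w N A B = map (\<lambda>k. zigzag.branch (disc M) \<xi> k c) [0..<N]"
  unfolding eig_list_def
proof (rule zigzag.concat_replicate_level_set[OF Z c])
  show "is_eigenvalue f q w N A B (of_real x) \<longleftrightarrow> poly (disc M) x = c" for x
    by (simp add: is_eigenvalue_iff_det eig)
  show "eig_mult f q w N A B (of_real x) = (if poly (pderiv (disc M)) x = 0 then 2 else 1)"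
    if "poly (disc M) x = c" for x
    using that eig[of x] zero[OF that] eig_mult_eq_1 eig_mult_eq_2 by auto
qed

lemma eig_list_periodic:
  assumes det: "det M = 1" and Z: "zigzag (disc M) N \<xi>"
  shows "eig_list f q w N (cmat M) (- cid) = map (\<lambda>k. zigzag.branch (disc M) \<xi> k 2) [0..<N]"
proof (rule eig_list_eq_branches[OF Z])
  have cm: "cmat M = (\<chi> i j. 1 * of_real (M$i$j))" by (simp add: cmat_def)
  show "det (cmat M + - cid ** transfer (of_real x)) = 0 \<longleftrightarrow> poly (disc M) x = 2" for x
    unfolding cm det_bc_scaled[OF det] by (simp add: complex_eq_iff)
  show "cmat M + - cid ** transfer (of_real x) = 0 \<longleftrightarrow> poly (pderiv (disc M)) x = 0"
    if "poly (disc M) x = 2" for x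
    using bc_scaled_eq_0_iff[of 1 M x] transfer_eq_smult_iff[OF det, of 1 x] that by (simp add: cmat_def)
qed simp

lemma eig_list_antiperiodic:
  assumes det: "det M = 1" and Z: "zigzag (disc M) N \<xi>"
  shows "eig_list f q w N (cmat (- M)) (- cid) = map (\<lambda>k. zigzag.branch (disc M) \<xi> k (-2)) [0..<N]"
proof (rule eig_list_eq_branches[OF Z])
  have cm: "cmat (- M) = (\<chi> i j. (-1) * of_real (M$i$j))" by (simp add: cmat_def)
  show "det (cmat (- M) + - cid ** transfer (of_real x)) = 0 \<longleftrightarrow> poly (disc M) x = -2" for x
    unfolding cm det_bc_scaled[OF det] by (auto simp: complex_eq_iff)
  show "cmat (- M) + - cid ** transfer (of_real x) = 0 \<longleftrightarrow> poly (pderiv (disc M)) x = 0"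
    if "poly (disc M) x = -2" for x
    using bc_scaled_eq_0_iff[of "-1" M x] transfer_eq_smult_iff[OF det, of "-1" x] that by (simp add: cmat_def)
qed simp

lemma eig_list_phase:
  assumes det: "det M = 1" and Z: "zigzag (disc M) N \<xi>" and sin: "sin \<gamma> \<noteq> 0"
  shows "eig_list f q w N (phase_mat \<gamma> M) (- cid) = map (\<lambda>k. zigzag.branch (disc M) \<xi> k (2 * cos \<gamma>)) [0..<N]"
proof (rule eig_list_eq_branches[OF Z])
  have "(cos \<gamma>)\<^sup>2 < 1" using sin sin_cos_squared_add[of \<gamma>] by (smt (verit) zero_less_power2)
  then have cos: "\<bar>2 * cos \<gamma>\<bar> < 2" by (simp add: abs_square_less_1)
  then show "\<bar>2 * cos \<gamma>\<bar> \<le> 2" by simp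
  show "det (phase_mat \<gamma> M + - cid ** transfer (of_real x)) = 0 \<longleftrightarrow> poly (disc M) x = 2 * cos \<gamma>" for x
    unfolding det_bc_phase[OF det] mult_eq_0_iff of_real_eq_0_iff by auto
  show "phase_mat \<gamma> M + - cid ** transfer (of_real x) = 0 \<longleftrightarrow> poly (pderiv (disc M)) x = 0"
    if "poly (disc M) x = 2 * cos \<gamma>" for x
  proof -
    have "0 < poly (U21 M) x * poly (pderiv (disc M)) x"
      using U21_pderiv_disc_pos[OF det] that cos by simp
    then show ?thesis using bc_phase_nonzero[OF det sin] by auto
  qed
qed

lemma eig_list_TK: "eig_list f q w N (TK_A K) (TK_B K) = sorted_list_of_set {x. poly (U21 K) x = 0}"
proof -
  define S where "S = {x. poly (U21 K) x = 0}"
  have "set (sorted_list_of_set S) \<subseteq> S" by (cases "finite S") auto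
  then have mult: "eig_mult f q w N (TK_A K) (TK_B K) (of_real x) = 1" if "x \<in> set (sorted_list_of_set S)" for x
    using eig_mult_eq_1[OF _ bc_TK_nonzero] det_bc_TK that by (auto simp: S_def)
  have "{x. is_eigenvalue f q w N (TK_A K) (TK_B K) (of_real x)} = S"
    by (simp add: is_eigenvalue_iff_det det_bc_TK S_def)
  then have "eig_list f q w N (TK_A K) (TK_B K)
      = concat (map (\<lambda>x. replicate (eig_mult f q w N (TK_A K) (TK_B K) (of_real x)) x) (sorted_list_of_set S))"
    unfolding eig_list_def by simp
  also have "\<dots> = concat (map (\<lambda>x. [x]) (sorted_list_of_set S))"
    using mult by (intro arg_cong[where f = concat] map_cong) simp_all
  also have "\<dots> = sorted_list_of_set S" by (induction "sorted_list_of_set S") simp_all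
  finally show ?thesis by (simp add: S_def)
qed

section \<open>Interlacing with the zeros of U21\<close>

context
  fixes M :: "real^2^2" and \<xi> :: "nat \<Rightarrow> real"
  assumes det: "det M = 1" and Z: "zigzag (disc M) N \<xi>"
begin

interpretation Z: zigzag "disc M" N \<xi> by (rule Z)

lemma U21_sign_at_zero_branch:
  assumes k: "k < N"
  shows "(-1) ^ k * poly (U21 M) (Z.branch k 0) < 0"
proof -
  have c: "\<bar>0::real\<bar> < 2" by simp
  have "if even k then poly (pderiv (disc M)) (Z.branch k 0) < 0 else poly (pderiv (disc M)) (Z.branch k 0) > 0"
    using Z.pderiv_alternating[OF k] Z.branch_in_open_piece[OF k c] .
  moreover have "poly (U21 M) (Z.branch k 0) * poly (pderiv (disc M)) (Z.branch k 0) > 0"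
    using U21_pderiv_disc_pos[OF det] Z.branch_spec(3)[OF k] by simp
  ultimately show ?thesis by (cases "even k") (auto simp: zero_less_mult_iff)
qed

lemma U21_root_between_zero_branches:
  assumes k: "k \<in> {1..<N}"
  shows "\<exists>r. Z.branch (k - 1) 0 < r \<and> r < Z.branch k 0 \<and> poly (U21 M) r = 0"
proof -
  have lt: "Z.branch (k - 1) 0 < Z.branch k 0" using k by (intro Z.branch_zero_less) auto
  have "(-1::real) ^ k = - ((-1) ^ (k - 1))" using k by (cases k) auto
  then have "poly (U21 M) (Z.branch (k - 1) 0) * poly (U21 M) (Z.branch k 0) < 0"
    using U21_sign_at_zero_branch[of "k - 1"] U21_sign_at_zero_branch[of k] k
    by (cases "even (k - 1)") (auto simp: mult_less_0_iff)
  then show ?thesis using poly_IVT[OF lt] by blast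
qed

lemma U21_root_vs_branches:
  assumes root: "poly (U21 M) r = 0" and k: "k < N" and c: "\<bar>c\<bar> \<le> 2"
  shows "r \<le> Z.branch k 0 \<Longrightarrow> r \<le> Z.branch k c" and "Z.branch k 0 \<le> r \<Longrightarrow> Z.branch k c \<le> r"
  using Z.le_branch_if_le_branch_zero[OF k] Z.branch_le_if_branch_zero_le[OF k]
    abs_disc_ge_2_if_U21_eq_0[OF det root] c by auto

text \<open>Between consecutive zeros of the discriminant U21 M changes sign, so the zeros of U21 M, which
  are the eigenvalues for T_K, interlace the zeros of the discriminant. Whether a further zero lies
  left or right of all of them (the hypotheses left, right) depends on the degree and the leading
  coefficient of U21 M.\<close>

lemma eig_list_TK_interlacing:
  assumes rK: "{x. poly (U21 K) x = 0} = {x. poly (U21 M) x = 0}"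
    and E: "U21 M \<noteq> 0" "degree (U21 M) \<le> b - a" and ab: "a \<le> 1" "N \<le> b" "b \<le> Suc N"
    and left: "a = 0 \<Longrightarrow> \<exists>r. r < Z.branch 0 0 \<and> poly (U21 M) r = 0"
    and right: "b = Suc N \<Longrightarrow> \<exists>r. Z.branch (N - 1) 0 < r \<and> poly (U21 M) r = 0"
  obtains r where "eig_list f q w N (TK_A K) (TK_B K) = map r [a..<b]"
    and "\<And>k. a \<le> k \<Longrightarrow> k < b \<Longrightarrow> poly (U21 M) (r k) = 0"
    and "\<And>k. a \<le> k \<Longrightarrow> k < b \<Longrightarrow> k < N \<Longrightarrow> r k < Z.branch k 0"
    and "\<And>k. a \<le> k \<Longrightarrow> k < b \<Longrightarrow> 0 < k \<Longrightarrow> Z.branch (k - 1) 0 < r k"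
proof -
  obtain ri where ri: "\<And>k. k \<in> {1..<N} \<Longrightarrow> Z.branch (k - 1) 0 < ri k \<and> ri k < Z.branch k 0 \<and> poly (U21 M) (ri k) = 0"
    using U21_root_between_zero_branches by metis
  obtain r0 rN where r0: "a = 0 \<Longrightarrow> r0 < Z.branch 0 0 \<and> poly (U21 M) r0 = 0"
    and rN: "b = Suc N \<Longrightarrow> Z.branch (N - 1) 0 < rN \<and> poly (U21 M) rN = 0"
    using left right by metis
  define r where "r k = (if k = 0 then r0 else if k = N then rN else ri k)" for k
  have N: "0 < N" using N_ge_2 by simp
  have root: "poly (U21 M) (r k) = 0" and below: "k < N \<Longrightarrow> r k < Z.branch k 0"
    and above: "0 < k \<Longrightarrow> Z.branch (k - 1) 0 < r k" if "a \<le> k" "k < b" for k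
    using that ab N r0 rN ri[of k] by (auto simp: r_def)
  have mono: "r i < r j" if "a \<le> i" "i < j" "j < b" for i j
  proof -
    have "r i < Z.branch i 0" using below that ab by simp
    also have "Z.branch i 0 \<le> Z.branch (j - 1) 0" using that ab by (intro Z.branch_mono) auto
    also have "Z.branch (j - 1) 0 < r j" using above that by simp
    finally show ?thesis .
  qed
  then have "inj_on r {a..<b}" by (intro inj_onI) (metis atLeastLessThan_iff less_irrefl nat_neq_iff)
  then have "{x. poly (U21 M) x = 0} = r ` {a..<b}"
    using poly_roots_eq_image[OF E(1), of "{a..<b}" r] E(2) root by simp
  then have "eig_list f q w N (TK_A K) (TK_B K) = map r [a..<b]"
    unfolding eig_list_TK rK using sorted_list_of_set_image_upt[of a b r] mono by simp
  then show ?thesis using that root below above by blast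
qed

end

abbreviation lam_per :: "real^2^2 \<Rightarrow> nat \<Rightarrow> real" where
  "lam_per M \<equiv> eigval f q w N (cmat M) (- cid)"
abbreviation lam_anti :: "real^2^2 \<Rightarrow> nat \<Rightarrow> real" where
  "lam_anti M \<equiv> eigval f q w N (cmat (- M)) (- cid)"
abbreviation lam_phase :: "real \<Rightarrow> real^2^2 \<Rightarrow> nat \<Rightarrow> real" where
  "lam_phase \<gamma> M \<equiv> eigval f q w N (phase_mat \<gamma> M) (- cid)"
abbreviation lam_T :: "real^2^2 \<Rightarrow> nat \<Rightarrow> real" where
  "lam_T K \<equiv> eigval f q w N (TK_A K) (TK_B K)"

context
  fixes M :: "real^2^2" and \<xi> :: "nat \<Rightarrow> real"
  assumes det: "det M = 1" and Z: "zigzag (disc M) N \<xi>"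
begin

interpretation Z: zigzag "disc M" N \<xi> by (rule Z)

lemma lam_branches:
  assumes "j < N"
  shows "lam_per M j = Z.branch j 2" "lam_anti M j = Z.branch j (-2)"
    and "sin \<gamma> \<noteq> 0 \<Longrightarrow> lam_phase \<gamma> M j = Z.branch j (2 * cos \<gamma>)"
  using assms eig_list_periodic[OF det Z] eig_list_antiperiodic[OF det Z] eig_list_phase[OF det Z]
  by (simp_all add: eigval_def)

lemma lam_phase_between:
  assumes sin: "sin \<gamma> \<noteq> 0" and j: "j < N"
  shows "(even j \<longrightarrow> lam_per M j < lam_phase \<gamma> M j \<and> lam_phase \<gamma> M j < lam_anti M j)
       \<and> (odd j \<longrightarrow> lam_anti M j < lam_phase \<gamma> M j \<and> lam_phase \<gamma> M j < lam_per M j)"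
proof -
  have "(cos \<gamma>)\<^sup>2 < 1" using sin sin_cos_squared_add[of \<gamma>] by (smt (verit) zero_less_power2)
  then have cos: "\<bar>cos \<gamma>\<bar> < 1" by (simp add: abs_square_less_1)
  have "if even j then Z.branch j 2 < Z.branch j (2 * cos \<gamma>) else Z.branch j (2 * cos \<gamma>) < Z.branch j 2"
    "if even j then Z.branch j (2 * cos \<gamma>) < Z.branch j (-2) else Z.branch j (-2) < Z.branch j (2 * cos \<gamma>)"
    using Z.branch_strict_mono_level[OF j, of "2 * cos \<gamma>" 2] Z.branch_strict_mono_level[OF j, of "-2" "2 * cos \<gamma>"] cos
    by auto
  then show ?thesis using lam_branches[OF j] sin by (auto split: if_splits)
qed

lemma lam_T_case_left_root:
  assumes rK: "{x. poly (U21 K) x = 0} = {x. poly (U21 M) x = 0}"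
    and f_prod: "(\<Prod>k<N. 1 / f k) > 0" and sign: "f 0 * M$1$1 > 0"
  shows "\<forall>j<N. lam_T K j \<le> min (lam_per M j) (lam_anti M j)"
    and "\<forall>j. j + 2 \<le> N \<longrightarrow> max (lam_per M j) (lam_anti M j) \<le> lam_T K (j + 1)"
proof -
  have "(\<Prod>k\<in>{1..N}. w k) > 0" using w_pos by (intro prod_pos) auto
  then have c: "(-1) ^ N * coeff (U21 M) N > 0" unfolding sign_lead_coeff_U21 using f_prod sign by simp
  then have deg: "degree (U21 M) = N" using degree_U21_le[of M] le_degree[of "U21 M" N] by fastforce
  have E: "U21 M \<noteq> 0" using deg N_ge_2 by auto
  have left: "\<exists>r. r < Z.branch 0 0 \<and> poly (U21 M) r = 0"
  proof -
    obtain R where R: "\<forall>x\<le>R. poly (U21 M) x > 0" using poly_minfty_gt[of "U21 M" 0] deg N_ge_2 c by auto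
    define R' where "R' = min R (Z.branch 0 0 - 1)"
    have "poly (U21 M) R' > 0" "poly (U21 M) (Z.branch 0 0) < 0" "R' < Z.branch 0 0"
      using R U21_sign_at_zero_branch[OF det Z, of 0] N_ge_2 by (auto simp: R'_def)
    then show ?thesis using poly_IVT_neg[of R' "Z.branch 0 0" "U21 M"] by force
  qed
  obtain r where r: "eig_list f q w N (TK_A K) (TK_B K) = map r [0..<N]"
    "\<And>k. 0 \<le> k \<Longrightarrow> k < N \<Longrightarrow> poly (U21 M) (r k) = 0"
    "\<And>k. 0 \<le> k \<Longrightarrow> k < N \<Longrightarrow> k < N \<Longrightarrow> r k < Z.branch k 0"
    "\<And>k. 0 \<le> k \<Longrightarrow> k < N \<Longrightarrow> 0 < k \<Longrightarrow> Z.branch (k - 1) 0 < r k"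
    by (rule eig_list_TK_interlacing[OF det Z rK E, where a = 0 and b = N]) (use deg left in auto)
  have lT: "lam_T K j = r j" if "j < N" for j using that r(1) by (simp add: eigval_def)
  show "\<forall>j<N. lam_T K j \<le> min (lam_per M j) (lam_anti M j)"
  proof (intro allI impI)
    fix j assume j: "j < N"
    show "lam_T K j \<le> min (lam_per M j) (lam_anti M j)"
      using U21_root_vs_branches(1)[OF det Z r(2) j] r(3)[of j] lam_branches[OF j] lT[OF j] j by simp
  qed
  show "\<forall>j. j + 2 \<le> N \<longrightarrow> max (lam_per M j) (lam_anti M j) \<le> lam_T K (j + 1)"
  proof (intro allI impI)
    fix j assume j: "j + 2 \<le> N"
    then have j': "j < N" "Suc j < N" by auto
    show "max (lam_per M j) (lam_anti M j) \<le> lam_T K (j + 1)"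
      using U21_root_vs_branches(2)[OF det Z r(2) j'(1)] r(4)[of "Suc j"] lam_branches[OF j'(1)] lT[OF j'(2)] j'
      by simp
  qed
qed

lemma lam_T_interlace_shifted:
  assumes list: "eig_list f q w N (TK_A K) (TK_B K) = map r [1..<b]" and b: "N \<le> b"
    and root: "\<And>k. 1 \<le> k \<Longrightarrow> k < b \<Longrightarrow> poly (U21 M) (r k) = 0"
    and below: "\<And>k. 1 \<le> k \<Longrightarrow> k < b \<Longrightarrow> k < N \<Longrightarrow> r k < Z.branch k 0"
    and above: "\<And>k. 1 \<le> k \<Longrightarrow> k < b \<Longrightarrow> 0 < k \<Longrightarrow> Z.branch (k - 1) 0 < r k"
  shows "\<forall>j. j + 2 \<le> N \<longrightarrow> max (lam_per M j) (lam_anti M j) \<le> lam_T K j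
      \<and> lam_T K j \<le> min (lam_per M (j + 1)) (lam_anti M (j + 1))"
proof (intro allI impI)
  fix j assume "j + 2 \<le> N"
  then have j: "j < N" "Suc j < N" "Suc j < b" using b by auto
  have "lam_T K j = r (Suc j)" using list j(3) by (simp add: eigval_def)
  then show "max (lam_per M j) (lam_anti M j) \<le> lam_T K j \<and> lam_T K j \<le> min (lam_per M (j + 1)) (lam_anti M (j + 1))"
    using U21_root_vs_branches[OF det Z root[of "Suc j"]] below[of "Suc j"] above[of "Suc j"]
      lam_branches[OF j(1)] lam_branches[OF j(2)] j by (simp add: less_imp_le)
qed

lemma lam_T_case_right_root:
  assumes rK: "{x. poly (U21 K) x = 0} = {x. poly (U21 M) x = 0}"
    and f_prod: "(\<Prod>k<N. 1 / f k) > 0" and sign: "f 0 * M$1$1 < 0"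
  shows "\<forall>j. j + 2 \<le> N \<longrightarrow> max (lam_per M j) (lam_anti M j) \<le> lam_T K j
      \<and> lam_T K j \<le> min (lam_per M (j + 1)) (lam_anti M (j + 1))"
    and "max (lam_per M (N - 1)) (lam_anti M (N - 1)) \<le> lam_T K (N - 1)"
proof -
  have "(\<Prod>k\<in>{1..N}. w k) > 0" using w_pos by (intro prod_pos) auto
  then have c: "(-1) ^ N * coeff (U21 M) N < 0" unfolding sign_lead_coeff_U21 using f_prod sign
    by (simp add: mult_pos_neg)
  then have deg: "degree (U21 M) = N" using degree_U21_le[of M] le_degree[of "U21 M" N] by fastforce
  have E: "U21 M \<noteq> 0" using deg N_ge_2 by auto
  have N: "N - 1 < N" "Suc (N - 1) = N" using N_ge_2 by auto
  have right: "\<exists>r. Z.branch (N - 1) 0 < r \<and> poly (U21 M) r = 0"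
  proof -
    define E' where "E' = smult ((-1) ^ Suc N) (U21 M)"
    have "degree E' = N" "lead_coeff E' > 0" using deg c by (simp_all add: E'_def)
    then obtain R where R: "\<forall>x\<ge>R. poly E' x > 0" using poly_pinfty_gt[of E' 0] N_ge_2 by auto
    define R' where "R' = max R (Z.branch (N - 1) 0 + 1)"
    have "(-1::real) ^ Suc N = (-1) ^ (N - 1)" using N_ge_2 by (cases N) auto
    then have "poly E' (Z.branch (N - 1) 0) < 0" "poly E' R' > 0" "Z.branch (N - 1) 0 < R'"
      using R U21_sign_at_zero_branch[OF det Z N(1)] by (auto simp: E'_def R'_def)
    then show ?thesis using poly_IVT_pos[of "Z.branch (N - 1) 0" R' E'] by (force simp: E'_def)
  qed
  obtain r where r: "eig_list f q w N (TK_A K) (TK_B K) = map r [1..<Suc N]"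
    "\<And>k. 1 \<le> k \<Longrightarrow> k < Suc N \<Longrightarrow> poly (U21 M) (r k) = 0"
    "\<And>k. 1 \<le> k \<Longrightarrow> k < Suc N \<Longrightarrow> k < N \<Longrightarrow> r k < Z.branch k 0"
    "\<And>k. 1 \<le> k \<Longrightarrow> k < Suc N \<Longrightarrow> 0 < k \<Longrightarrow> Z.branch (k - 1) 0 < r k"
    by (rule eig_list_TK_interlacing[OF det Z rK E, where a = 1 and b = "Suc N"]) (use deg right in auto)
  show "\<forall>j. j + 2 \<le> N \<longrightarrow> max (lam_per M j) (lam_anti M j) \<le> lam_T K j
      \<and> lam_T K j \<le> min (lam_per M (j + 1)) (lam_anti M (j + 1))"
    using lam_T_interlace_shifted[OF r(1) _ r(2-4)] by simp
  have "lam_T K (N - 1) = r N" using r(1) N by (simp add: eigval_def nth_map_upt del: upt_Suc)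
  then show "max (lam_per M (N - 1)) (lam_anti M (N - 1)) \<le> lam_T K (N - 1)"
    using U21_root_vs_branches(2)[OF det Z r(2)[of N] N(1)] r(4)[of N] lam_branches[OF N(1)] N N_ge_2 by simp
qed

lemma lam_T_case_lower_degree:
  assumes rK: "{x. poly (U21 K) x = 0} = {x. poly (U21 M) x = 0}" and m11: "M$1$1 = 0"
  shows "\<forall>j. j + 2 \<le> N \<longrightarrow> max (lam_per M j) (lam_anti M j) \<le> lam_T K j
      \<and> lam_T K j \<le> min (lam_per M (j + 1)) (lam_anti M (j + 1))"
proof -
  have "M$2$1 \<noteq> 0" using det m11 by (auto simp: det_2)
  then have "coeff (U21 M) (N - 1) \<noteq> 0" using U21_if_M11_eq_0(2)[OF m11] lead_factor_nonzero by simp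
  then have E: "U21 M \<noteq> 0" by auto
  obtain r where r: "eig_list f q w N (TK_A K) (TK_B K) = map r [1..<N]"
    "\<And>k. 1 \<le> k \<Longrightarrow> k < N \<Longrightarrow> poly (U21 M) (r k) = 0"
    "\<And>k. 1 \<le> k \<Longrightarrow> k < N \<Longrightarrow> k < N \<Longrightarrow> r k < Z.branch k 0"
    "\<And>k. 1 \<le> k \<Longrightarrow> k < N \<Longrightarrow> 0 < k \<Longrightarrow> Z.branch (k - 1) 0 < r k"
    by (rule eig_list_TK_interlacing[OF det Z rK E, where a = 1 and b = N])
      (use U21_if_M11_eq_0(1)[OF m11] in auto)
  then show ?thesis using lam_T_interlace_shifted[OF r(1) _ r(2-4)] by simp
qed

end

lemma eigenvalue_comparison:
  assumes K: "det K = 1" and f_prod: "(\<Prod>k<N. 1 / f k) > 0" and sin: "sin \<gamma> \<noteq> 0"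
    and M: "M \<in> {K, -K}"
  defines "phase_interlaced \<equiv> \<forall>j<N. (even j \<longrightarrow> lam_per M j < lam_phase \<gamma> M j \<and> lam_phase \<gamma> M j < lam_anti M j)
                   \<and> (odd j \<longrightarrow> lam_anti M j < lam_phase \<gamma> M j \<and> lam_phase \<gamma> M j < lam_per M j)"
  shows "(M $ 1 $ 1 - f 0 * M $ 1 $ 2 > 0 \<and> f 0 * M $ 1 $ 1 > 0 \<longrightarrow>
           phase_interlaced \<and> (\<forall>j<N. lam_T K j \<le> min (lam_per M j) (lam_anti M j))
             \<and> (\<forall>j. j + 2 \<le> N \<longrightarrow> max (lam_per M j) (lam_anti M j) \<le> lam_T K (j + 1)))
      \<and> (M $ 1 $ 1 - f 0 * M $ 1 $ 2 > 0 \<and> f 0 * M $ 1 $ 1 < 0 \<longrightarrow>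
           phase_interlaced \<and> (\<forall>j. j + 2 \<le> N \<longrightarrow> max (lam_per M j) (lam_anti M j) \<le> lam_T K j
                     \<and> lam_T K j \<le> min (lam_per M (j + 1)) (lam_anti M (j + 1)))
             \<and> max (lam_per M (N - 1)) (lam_anti M (N - 1)) \<le> lam_T K (N - 1))
      \<and> (f 0 * M $ 1 $ 2 < 0 \<and> M $ 1 $ 1 = 0 \<longrightarrow>
           phase_interlaced \<and> (\<forall>j. j + 2 \<le> N \<longrightarrow> max (lam_per M j) (lam_anti M j) \<le> lam_T K j
                     \<and> lam_T K j \<le> min (lam_per M (j + 1)) (lam_anti M (j + 1))))"
proof -
  have det: "det M = 1" using M K by (auto simp: det_2)
  have rK: "{x. poly (U21 K) x = 0} = {x. poly (U21 M) x = 0}" using M by (auto simp: U21_def)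
  have "phase_interlaced \<and> (f 0 * M $ 1 $ 1 > 0 \<longrightarrow> (\<forall>j<N. lam_T K j \<le> min (lam_per M j) (lam_anti M j))
             \<and> (\<forall>j. j + 2 \<le> N \<longrightarrow> max (lam_per M j) (lam_anti M j) \<le> lam_T K (j + 1)))
      \<and> (f 0 * M $ 1 $ 1 < 0 \<longrightarrow> (\<forall>j. j + 2 \<le> N \<longrightarrow> max (lam_per M j) (lam_anti M j) \<le> lam_T K j
                     \<and> lam_T K j \<le> min (lam_per M (j + 1)) (lam_anti M (j + 1)))
             \<and> max (lam_per M (N - 1)) (lam_anti M (N - 1)) \<le> lam_T K (N - 1))
      \<and> (M $ 1 $ 1 = 0 \<longrightarrow> (\<forall>j. j + 2 \<le> N \<longrightarrow> max (lam_per M j) (lam_anti M j) \<le> lam_T K j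
                     \<and> lam_T K j \<le> min (lam_per M (j + 1)) (lam_anti M (j + 1))))"
    if pos: "M $ 1 $ 1 - f 0 * M $ 1 $ 2 > 0"
  proof -
    obtain \<xi> where Z: "zigzag (disc M) N \<xi>" using disc_zigzag[OF det pos f_prod] by blast
    have phase_interlaced
      unfolding phase_interlaced_def using lam_phase_between[OF det Z sin] by blast
    then show ?thesis
      using lam_T_case_left_root[OF det Z rK f_prod] lam_T_case_right_root[OF det Z rK f_prod]
        lam_T_case_lower_degree[OF det Z rK] by blast
  qed
  moreover have "f 0 * M $ 1 $ 2 < 0 \<and> M $ 1 $ 1 = 0 \<Longrightarrow> M $ 1 $ 1 - f 0 * M $ 1 $ 2 > 0" by simp
  ultimately show ?thesis by blast
qed

end

theorem theorem3p10:
  fixes f q w :: "nat \<Rightarrow> real" and N :: nat and \<gamma> :: real and K :: "real^2^2"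
  assumes N2: "N \<ge> 2"
    and f_nz: "\<forall>n\<le>N. f n \<noteq> 0"
    and w_pos: "\<forall>n\<in>{1..N}. w n > 0"
    and f_prod: "(\<Prod>i<N. 1 / f i) > 0"
    and gamma: "\<gamma> \<in> {-pi<..<0} \<union> {0<..<pi}"
    and K_SL: "det K = 1"
    and K_cond: "K $ 1 $ 1 - f 0 * K $ 1 $ 2 \<noteq> 0"
  shows "\<forall>M \<in> {K, -K}.
    (let lam = (\<lambda>j. eigval f q w N (cmat M) (- cid) j);
         lamm = (\<lambda>j. eigval f q w N (cmat (- M)) (- cid) j);
         lamg = (\<lambda>j. eigval f q w N (phase_mat \<gamma> M) (- cid) j);
         lamT = (\<lambda>j. eigval f q w N (TK_A K) (TK_B K) j);
         mn = (\<lambda>j. min (lam j) (lamm j));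
         mx = (\<lambda>j. max (lam j) (lamm j));
         P = (\<forall>j<N. (even j \<longrightarrow> lam j < lamg j \<and> lamg j < lamm j)
                   \<and> (odd j \<longrightarrow> lamm j < lamg j \<and> lamg j < lam j))
     in (M $ 1 $ 1 - f 0 * M $ 1 $ 2 > 0 \<and> f 0 * M $ 1 $ 1 > 0 \<longrightarrow>
           P \<and> (\<forall>j<N. lamT j \<le> mn j) \<and> (\<forall>j. j + 2 \<le> N \<longrightarrow> mx j \<le> lamT (j + 1)))
      \<and> (M $ 1 $ 1 - f 0 * M $ 1 $ 2 > 0 \<and> f 0 * M $ 1 $ 1 < 0 \<longrightarrow>
           P \<and> (\<forall>j. j + 2 \<le> N \<longrightarrow> mx j \<le> lamT j \<and> lamT j \<le> mn (j + 1))
             \<and> mx (N - 1) \<le> lamT (N - 1))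
      \<and> (f 0 * M $ 1 $ 2 < 0 \<and> M $ 1 $ 1 = 0 \<longrightarrow>
           P \<and> (\<forall>j. j + 2 \<le> N \<longrightarrow> mx j \<le> lamT j \<and> lamT j \<le> mn (j + 1))))"
proof -
  interpret sl_equation f q w N using N2 f_nz w_pos by unfold_locales auto
  have sin: "sin \<gamma> \<noteq> 0" using gamma sin_gt_zero[of \<gamma>] sin_gt_zero[of "- \<gamma>"] by auto
  show ?thesis unfolding Let_def by (rule ballI, rule eigenvalue_comparison[OF K_SL f_prod sin])
qed

end
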